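(* Let $E,F$ be vector lattices with $F$ Dedekind complete and let $\mathfrak{A}$ be an upward saturated family of admissible subsets of $E$. Then $\pi^{\mathfrak{A}}:=\inf\{\pi^{D}:\ D\in\mathfrak{A}\}$ (infimum in the Boolean algebra of band projections of $\mathcal{U}(E,F)$) is the band projection of $\mathcal{U}(E,F)$ onto $\mathcal{U}_{\mathfrak{A}}(E,F)^{\perp}$, where $\mathcal{U}_{\mathfrak{A}}(E,F)=\{T\in\mathcal{U}(E,F):\ \mathcal{N}_{T}\in\mathfrak{A}\}$.
   Context: For vector lattices $E,F$, an operator (not necessarily linear) $T:E\to F$ is orthogonally additive if $T(x+y)=T(x)+T(y)$ whenever $x\perp y$; positive if $T(x)\geq0$ for all $x$; order bounded if it maps order bounded sets to order bounded sets. Abstract Uryson operators are the orthogonally additive order bounded operators; $\mathcal{U}(E,F)$ is their space, $\mathcal{U}_{+}(E,F)$ the positive ones, ordered by $S\leq T$ iff $T-S$ is positive; for $F$ Dedekind complete it is a Dedekind complete vector lattice. An element $z$ is a fragment of $x$, written $z\sqsubseteq x$, if $z\perp(x-z)$. A subset $D\subset E$ is admissible if (1) $x\in D$ and $y\sqsubseteq x$ imply $y\in D$, and (2) $x,y\in D$ with $x\perp y$ imply $x+y\in D$; $AD(E)$ is the set of admissible subsets. For an admissible $D$ and $T\in\mathcal{U}_{+}(E,F)$, $\pi^{D}T(x)=\sup\{T(y): y\sqsubseteq x,\ y\in D\}$; the map $T\mapsto\pi^{D}T$ is (the restriction to positive operators of) a band projection on $\mathcal{U}(E,F)$, also denoted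 $\pi^{D}$. A family $\mathfrak{A}\subset AD(E)$ is upward saturated if $A\in\mathfrak{A}$, $B\in AD(E)$, $B\supset A$ imply $B\in\mathfrak{A}$. For $T\in\mathcal{U}(E,F)$, $\mathcal{N}_{T}=\{e\in E: T(e)=0\}$. *)

theory Defs
  imports Complex_Main
begin

text \<open>Vector lattices E: type class ordered_real_vector + lattice.
  Dedekind complete vector lattices F: ordered_real_vector + conditionally_complete_lattice.\<close>

definition vabs :: "'a::{ordered_real_vector,lattice} \<Rightarrow> 'a" where
  "vabs x = sup x (- x)"

definition disj :: "'a::{ordered_real_vector,lattice} \<Rightarrow> 'a \<Rightarrow> bool" where
  "disj x y \<longleftrightarrow> inf (vabs x) (vabs y) = 0"

definition fragment :: "'a::{ordered_real_vector,lattice} \<Rightarrow> 'a \<Rightarrow> bool" where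
  "fragment z x \<longleftrightarrow> disj z (x - z)"

definition admissible :: "'a::{ordered_real_vector,lattice} set \<Rightarrow> bool" where
  "admissible D \<longleftrightarrow> (\<forall>x\<in>D. \<forall>y. fragment y x \<longrightarrow> y \<in> D)
      \<and> (\<forall>x\<in>D. \<forall>y\<in>D. disj x y \<longrightarrow> x + y \<in> D)"

definition upward_saturated :: "'a::{ordered_real_vector,lattice} set set \<Rightarrow> bool" where
  "upward_saturated AA \<longleftrightarrow> (\<forall>A\<in>AA. \<forall>B. admissible B \<and> A \<subseteq> B \<longrightarrow> B \<in> AA)"

definition orth_additive ::
  "('a::{ordered_real_vector,lattice} \<Rightarrow> 'b::{ordered_real_vector,lattice}) \<Rightarrow> bool" where
  "orth_additive T \<longleftrightarrow> (\<forall>x y. disj x y \<longrightarrow> T (x + y) = T x + T y)"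

definition order_bounded_op ::
  "('a::{ordered_real_vector,lattice} \<Rightarrow> 'b::{ordered_real_vector,lattice}) \<Rightarrow> bool" where
  "order_bounded_op T \<longleftrightarrow>
     (\<forall>S. (\<exists>a b. \<forall>x\<in>S. a \<le> x \<and> x \<le> b) \<longrightarrow> (\<exists>c d. \<forall>x\<in>S. c \<le> T x \<and> T x \<le> d))"

definition uryson ::
  "('a::{ordered_real_vector,lattice} \<Rightarrow> 'b::{ordered_real_vector,lattice}) set" where
  "uryson = {T. orth_additive T \<and> order_bounded_op T}"

definition op_pos :: "('a \<Rightarrow> 'b::{ordered_real_vector,lattice}) \<Rightarrow> bool" where
  "op_pos T \<longleftrightarrow> (\<forall>x. 0 \<le> T x)"

definition op_le :: "('a \<Rightarrow> 'b::{ordered_real_vector,lattice}) \<Rightarrow> ('a \<Rightarrow> 'b) \<Rightarrow> bool" where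
  "op_le S T \<longleftrightarrow> op_pos (\<lambda>x. T x - S x)"

definition is_lub_U ::
  "('a::{ordered_real_vector,lattice} \<Rightarrow> 'b::{ordered_real_vector,lattice}) set \<Rightarrow> ('a \<Rightarrow> 'b) \<Rightarrow> bool" where
  "is_lub_U A T \<longleftrightarrow> T \<in> uryson \<and> (\<forall>S\<in>A. op_le S T)
      \<and> (\<forall>R\<in>uryson. (\<forall>S\<in>A. op_le S R) \<longrightarrow> op_le T R)"

definition is_glb_U ::
  "('a::{ordered_real_vector,lattice} \<Rightarrow> 'b::{ordered_real_vector,lattice}) set \<Rightarrow> ('a \<Rightarrow> 'b) \<Rightarrow> bool" where
  "is_glb_U A T \<longleftrightarrow> T \<in> uryson \<and> (\<forall>S\<in>A. op_le T S)
      \<and> (\<forall>R\<in>uryson. (\<forall>S\<in>A. op_le R S) \<longrightarrow> op_le R T)"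

definition usup ::
  "('a::{ordered_real_vector,lattice} \<Rightarrow> 'b::{ordered_real_vector,lattice}) \<Rightarrow> ('a \<Rightarrow> 'b) \<Rightarrow> ('a \<Rightarrow> 'b)" where
  "usup S T = (THE R. is_lub_U {S, T} R)"

definition uinf ::
  "('a::{ordered_real_vector,lattice} \<Rightarrow> 'b::{ordered_real_vector,lattice}) \<Rightarrow> ('a \<Rightarrow> 'b) \<Rightarrow> ('a \<Rightarrow> 'b)" where
  "uinf S T = (THE R. is_glb_U {S, T} R)"

definition uabs ::
  "('a::{ordered_real_vector,lattice} \<Rightarrow> 'b::{ordered_real_vector,lattice}) \<Rightarrow> ('a \<Rightarrow> 'b)" where
  "uabs T = usup T (\<lambda>x. - T x)"

definition upos ::
  "('a::{ordered_real_vector,lattice} \<Rightarrow> 'b::{ordered_real_vector,lattice}) \<Rightarrow> ('a \<Rightarrow> 'b)" where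
  "upos T = usup T (\<lambda>x. 0)"

definition uneg ::
  "('a::{ordered_real_vector,lattice} \<Rightarrow> 'b::{ordered_real_vector,lattice}) \<Rightarrow> ('a \<Rightarrow> 'b)" where
  "uneg T = usup (\<lambda>x. - T x) (\<lambda>x. 0)"

definition udisj ::
  "('a::{ordered_real_vector,lattice} \<Rightarrow> 'b::{ordered_real_vector,lattice}) \<Rightarrow> ('a \<Rightarrow> 'b) \<Rightarrow> bool" where
  "udisj S T \<longleftrightarrow> uinf (uabs S) (uabs T) = (\<lambda>x. 0)"

definition uorth ::
  "('a::{ordered_real_vector,lattice} \<Rightarrow> 'b::{ordered_real_vector,lattice}) set \<Rightarrow> ('a \<Rightarrow> 'b) set" where
  "uorth A = {T \<in> uryson. \<forall>S\<in>A. udisj S T}"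

definition uband ::
  "('a::{ordered_real_vector,lattice} \<Rightarrow> 'b::{ordered_real_vector,lattice}) set \<Rightarrow> bool" where
  "uband B \<longleftrightarrow> B \<subseteq> uryson \<and> (\<lambda>x. 0) \<in> B
     \<and> (\<forall>S\<in>B. \<forall>T\<in>B. (\<lambda>x. S x + T x) \<in> B)
     \<and> (\<forall>c. \<forall>S\<in>B. (\<lambda>x. c *\<^sub>R S x) \<in> B)
     \<and> (\<forall>S\<in>uryson. \<forall>T\<in>B. op_le (uabs S) (uabs T) \<longrightarrow> S \<in> B)
     \<and> (\<forall>A T. A \<subseteq> B \<and> is_lub_U A T \<longrightarrow> T \<in> B)"

text \<open>P is the (band) projection of U(E,F) onto B: every T in U splits as
  T = P T + (T - P T) with P T in B and T - P T in the disjoint complement of B.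
  Only the values of P on U(E,F) are relevant.\<close>
definition proj_onto ::
  "(('a::{ordered_real_vector,lattice} \<Rightarrow> 'b::{ordered_real_vector,lattice}) \<Rightarrow> ('a \<Rightarrow> 'b))
     \<Rightarrow> ('a \<Rightarrow> 'b) set \<Rightarrow> bool" where
  "proj_onto P B \<longleftrightarrow> (\<forall>T\<in>uryson. P T \<in> B \<and> (\<lambda>x. T x - P T x) \<in> uorth B)"

definition band_proj ::
  "(('a::{ordered_real_vector,lattice} \<Rightarrow> 'b::{ordered_real_vector,lattice}) \<Rightarrow> ('a \<Rightarrow> 'b)) \<Rightarrow> bool" where
  "band_proj P \<longleftrightarrow> (\<exists>B. uband B \<and> proj_onto P B)"

definition bp_le ::
  "(('a::{ordered_real_vector,lattice} \<Rightarrow> 'b::{ordered_real_vector,lattice}) \<Rightarrow> ('a \<Rightarrow> 'b))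
     \<Rightarrow> (('a \<Rightarrow> 'b) \<Rightarrow> ('a \<Rightarrow> 'b)) \<Rightarrow> bool" where
  "bp_le P Q \<longleftrightarrow> (\<forall>T\<in>uryson. op_pos T \<longrightarrow> op_le (P T) (Q T))"

definition is_inf_bp ::
  "(('a::{ordered_real_vector,lattice} \<Rightarrow> 'b::{ordered_real_vector,lattice}) \<Rightarrow> ('a \<Rightarrow> 'b)) set
     \<Rightarrow> (('a \<Rightarrow> 'b) \<Rightarrow> ('a \<Rightarrow> 'b)) \<Rightarrow> bool" where
  "is_inf_bp PP P \<longleftrightarrow> band_proj P \<and> (\<forall>Q\<in>PP. bp_le P Q)
     \<and> (\<forall>R. band_proj R \<and> (\<forall>Q\<in>PP. bp_le R Q) \<longrightarrow> bp_le R P)"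

text \<open>pi^D on positive operators: sup of T(y) over fragments y of x lying in D
  (0 is included, which is harmless since T(0)=0 and makes the empty D give 0).\<close>
definition piD_pos ::
  "'a::{ordered_real_vector,lattice} set \<Rightarrow> ('a \<Rightarrow> 'b::{ordered_real_vector,conditionally_complete_lattice})
     \<Rightarrow> ('a \<Rightarrow> 'b)" where
  "piD_pos D T = (\<lambda>x. Sup (insert 0 {T y | y. fragment y x \<and> y \<in> D}))"

definition piD ::
  "'a::{ordered_real_vector,lattice} set \<Rightarrow> ('a \<Rightarrow> 'b::{ordered_real_vector,conditionally_complete_lattice})
     \<Rightarrow> ('a \<Rightarrow> 'b)" where
  "piD D T = (\<lambda>x. piD_pos D (upos T) x - piD_pos D (uneg T) x)"

definition null_set :: "('a \<Rightarrow> 'b::zero) \<Rightarrow> 'a set" where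
  "null_set T = {e. T e = 0}"

definition U_fam ::
  "'a::{ordered_real_vector,lattice} set set \<Rightarrow> ('a \<Rightarrow> 'b::{ordered_real_vector,lattice}) set" where
  "U_fam AA = {T \<in> uryson. null_set T \<in> AA}"

end

theory Submission
  imports Defs "HOL-Library.Lattice_Algebras"
begin

text \<open>For positive \<open>T\<close> let \<open>\<pi>\<^sup>\<AA> T\<close> be the pointwise infimum of \<open>\<pi>\<^sup>G T\<close> over all finite
  intersections \<open>G\<close> of members of \<open>\<AA>\<close>, and extend it to \<open>U(E,F)\<close> by \<open>\<pi>\<^sup>\<AA> T = \<pi>\<^sup>\<AA> T\<^sup>+ - \<pi>\<^sup>\<AA> T\<^sup>-\<close>.
  The key observation is that \<open>T \<in> \<U>\<^sub>\<AA>(E,F)\<^sup>\<perp>\<close> iff \<open>\<pi>\<^sup>D |T| = |T|\<close> for every \<open>D \<in> \<AA>\<close>: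
  if \<open>S \<in> \<U>\<^sub>\<AA>\<close> then \<open>|S|\<close> vanishes on the admissible set \<open>\<N>\<^sub>S \<in> \<AA>\<close>, so \<open>|S| \<and> \<pi>\<^sup>D |T| = 0\<close> for
  \<open>D = \<N>\<^sub>S\<close>; conversely the null set of \<open>|T| - \<pi>\<^sup>D |T|\<close> is admissible and contains \<open>D\<close>, hence
  lies in \<open>\<AA>\<close> by upward saturation, which makes \<open>|T| - \<pi>\<^sup>D |T|\<close> a positive operator in
  \<open>\<U>\<^sub>\<AA>\<close> below \<open>|T|\<close> and therefore zero.

  With this criterion \<open>\<pi>\<^sup>\<AA> T\<close> lies in \<open>B = \<U>\<^sub>\<AA>\<^sup>\<perp>\<close> and \<open>T - \<pi>\<^sup>\<AA> T\<close> is disjoint from \<open>B\<close>;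
  as \<open>B\<close> is a band, \<open>\<pi>\<^sup>\<AA>\<close> is the band projection onto \<open>B\<close>. It lies below each \<open>\<pi>\<^sup>D\<close>, and any
  band projection \<open>R\<close> below all \<open>\<pi>\<^sup>D\<close> satisfies
  \<open>R T = R (R T) \<le> \<pi>\<^sup>D (R T) \<le> \<pi>\<^sup>D \<pi>\<^sup>G T = \<pi>\<^sup>D\<^sup>\<inter>\<^sup>G T\<close>, hence \<open>R \<le> \<pi>\<^sup>\<AA>\<close>.\<close>

section \<open>Vector lattices\<close>

text \<open>The sort \<open>{ordered_ab_group_add, lattice}\<close> is not the class \<open>lattice_ab_group_add\<close>,
  so the lemmas of that class are transferred through its class predicate.\<close>

lemma lattice_ab_group_add_inst:
  "class.lattice_ab_group_add (+) (0::'a::{ordered_ab_group_add,lattice}) (-) uminus (\<le>) (<) inf sup"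
  by unfold_locales

lemmas lat_add_inf_distrib_right = lattice_ab_group_add.add_sup_inf_distribs(1)[OF lattice_ab_group_add_inst]
  and lat_add_inf_distrib_left = lattice_ab_group_add.add_sup_inf_distribs(2)[OF lattice_ab_group_add_inst]
  and lat_add_sup_distrib_right = lattice_ab_group_add.add_sup_inf_distribs(3)[OF lattice_ab_group_add_inst]
  and lat_add_sup_distrib_left = lattice_ab_group_add.add_sup_inf_distribs(4)[OF lattice_ab_group_add_inst]
  and lat_neg_inf_eq_sup = lattice_ab_group_add.neg_inf_eq_sup[OF lattice_ab_group_add_inst]
  and lat_add_eq_sup_inf = lattice_ab_group_add.add_eq_inf_sup[OF lattice_ab_group_add_inst]

lemma nonneg_if_double_nonneg: "0 \<le> (a::'a::ordered_real_vector) + a \<Longrightarrow> 0 \<le> a"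
proof -
  assume "0 \<le> a + a"
  then have "0 \<le> (1/2::real) *\<^sub>R (a + a)" using scaleR_nonneg_nonneg[of "1/2" "a+a"] by simp
  also have "(1/2::real) *\<^sub>R (a + a) = ((1/2::real) + 1/2) *\<^sub>R a"
    by (simp only: scaleR_add_right scaleR_add_left)
  also have "\<dots> = a" by simp
  finally show ?thesis .
qed

lemma zero_le_add_iff_minus_le: "0 \<le> a + b \<longleftrightarrow> - a \<le> (b::'a::ordered_ab_group_add)"
  using add_le_cancel_left[of "- a" 0 "a + b"] by simp

lemma scaleR_inf_distrib:
  fixes a b :: "'a::{ordered_real_vector,lattice}"
  assumes c: "0 < c"
  shows "c *\<^sub>R inf a b = inf (c *\<^sub>R a) (c *\<^sub>R b)"
proof (rule order.antisym)
  show "c *\<^sub>R inf a b \<le> inf (c *\<^sub>R a) (c *\<^sub>R b)" using c by (simp add: scaleR_left_mono)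
  define z where "z = inf (c *\<^sub>R a) (c *\<^sub>R b)"
  have "(1/c) *\<^sub>R z \<le> (1/c) *\<^sub>R (c *\<^sub>R a)" "(1/c) *\<^sub>R z \<le> (1/c) *\<^sub>R (c *\<^sub>R b)"
    using c unfolding z_def by (intro scaleR_left_mono; simp)+
  then have "(1/c) *\<^sub>R z \<le> inf a b" using c by simp
  then have "c *\<^sub>R ((1/c) *\<^sub>R z) \<le> c *\<^sub>R inf a b" using c by (intro scaleR_left_mono) auto
  then show "z \<le> c *\<^sub>R inf a b" using c by simp
qed

lemma inf_add_le_add_inf:
  fixes a b c :: "'a::{ordered_real_vector,lattice}"
  assumes "0 \<le> a" "0 \<le> b" "0 \<le> c"
  shows "inf a (b + c) \<le> inf a b + inf a c"
proof -
  have "inf a (b + c) \<le> inf (a + c) (b + c)"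
    by (rule inf_mono) (use assms in \<open>simp_all add: add_increasing2\<close>)
  also have "\<dots> = inf a b + c" by (rule lat_add_inf_distrib_right[symmetric])
  finally have "inf a (b + c) \<le> inf a b + c" .
  moreover have "a \<le> inf a b + a" by (rule add_increasing[OF _ order_refl]) (use assms in simp)
  then have "inf a (b + c) \<le> inf a b + a" using inf_le1 order.trans by blast
  ultimately have "inf a (b + c) \<le> inf (inf a b + c) (inf a b + a)" by (rule le_infI)
  also have "\<dots> = inf a b + inf c a" by (rule lat_add_inf_distrib_left[symmetric])
  finally show ?thesis by (simp add: inf_commute)
qed

lemma riesz_decomposition:
  fixes a b c :: "'a::{ordered_real_vector,lattice}"
  assumes "0 \<le> c" "c \<le> a + b" "0 \<le> a" "0 \<le> b"
  shows "0 \<le> c - inf c a" "c - inf c a \<le> b" "0 \<le> inf c a" "inf c a \<le> a"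
proof -
  have "c - inf c a = c + sup (- c) (- a)" by (simp only: diff_conv_add_uminus lat_neg_inf_eq_sup)
  also have "\<dots> = sup 0 (c - a)" by (simp only: lat_add_sup_distrib_left) simp
  finally have e: "c - inf c a = sup 0 (c - a)" .
  show "0 \<le> c - inf c a" unfolding e by (rule sup.cobounded1)
  have "c - a \<le> b" using assms(2) by (simp add: diff_le_eq add.commute)
  then show "c - inf c a \<le> b" unfolding e using assms(4) by simp
  show "0 \<le> inf c a" using assms(1,3) by (rule le_infI)
  show "inf c a \<le> a" by (rule inf.cobounded2)
qed

lemma vabs_ge: "x \<le> vabs x" "- x \<le> vabs x"
  by (auto simp: vabs_def)

lemma vabs_le_iff: "vabs x \<le> c \<longleftrightarrow> x \<le> c \<and> - x \<le> c"
  by (simp add: vabs_def)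

lemma vabs_nonneg: "0 \<le> vabs (x::'a::{ordered_real_vector,lattice})"
proof -
  have "x + - x \<le> vabs x + vabs x" by (rule add_mono[OF vabs_ge(1)[of x] vabs_ge(2)[of x]])
  then have "0 \<le> vabs x + vabs x" by simp
  then show ?thesis by (rule nonneg_if_double_nonneg)
qed

lemma vabs_minus [simp]: "vabs (- x) = vabs x"
  by (simp add: vabs_def sup_commute)

lemma vabs_of_nonneg [simp]: "0 \<le> x \<Longrightarrow> vabs x = x"
  unfolding vabs_def by (rule sup.absorb1) (use order.trans[of "- x" 0 x] in simp)

lemma vabs_triangle: "vabs (x + y) \<le> vabs x + vabs (y::'a::{ordered_real_vector,lattice})"
  unfolding vabs_le_iff using add_mono[OF vabs_ge(1)[of x] vabs_ge(1)[of y]]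
    add_mono[OF vabs_ge(2)[of x] vabs_ge(2)[of y]] by (simp_all add: algebra_simps)

lemma vabs_diff_le: "vabs (x - y) \<le> vabs x + vabs (y::'a::{ordered_real_vector,lattice})"
  using vabs_triangle[of x "- y"] by simp

definition pos_part :: "'a::{ordered_real_vector,lattice} \<Rightarrow> 'a" where
  "pos_part x = sup x 0"

definition neg_part :: "'a::{ordered_real_vector,lattice} \<Rightarrow> 'a" where
  "neg_part x = sup (- x) 0"

lemma pos_part_nonneg: "0 \<le> pos_part x" and neg_part_nonneg: "0 \<le> neg_part x"
  by (simp_all add: pos_part_def neg_part_def)

lemma pos_part_minus_neg_part: "pos_part x - neg_part x = x"
proof -
  have "pos_part x = x + neg_part x"
    using lat_add_sup_distrib_left[of x "- x" 0] by (simp add: pos_part_def neg_part_def sup_commute)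
  then show ?thesis by simp
qed

lemma sup_pos_part_neg_part: "sup (pos_part x) (neg_part x) = vabs x"
  using sup.absorb1[OF vabs_nonneg[of x]]
  by (simp add: pos_part_def neg_part_def vabs_def ac_simps)

lemma pos_part_le_vabs: "pos_part x \<le> vabs x" and neg_part_le_vabs: "neg_part x \<le> vabs x"
  using sup_pos_part_neg_part[of x] by (metis sup.cobounded1 sup.cobounded2)+

lemma pos_part_plus_neg_part: "pos_part x + neg_part x = vabs x"
proof -
  have "pos_part x + neg_part x = sup (x + neg_part x) (neg_part x)"
    using lat_add_sup_distrib_right[of x 0 "neg_part x"] by (simp add: pos_part_def)
  also have "x + neg_part x = sup 0 x"
    using lat_add_sup_distrib_left[of x "- x" 0] by (simp add: neg_part_def)
  finally show ?thesis
    using sup.absorb1[OF vabs_nonneg[of x]] by (simp add: neg_part_def vabs_def ac_simps)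
qed

lemma inf_pos_part_neg_part: "inf (pos_part x) (neg_part x) = 0"
  using lat_add_eq_sup_inf[of "pos_part x" "neg_part x"] pos_part_plus_neg_part[of x]
    sup_pos_part_neg_part[of x] by simp

lemma vabs_diff_eq_sup_minus_inf: "vabs (p - n) = sup p n - inf p (n::'a::{ordered_real_vector,lattice})"
proof -
  have "sup p n - inf p n = sup p n + sup (- p) (- n)"
    by (simp only: diff_conv_add_uminus lat_neg_inf_eq_sup)
  also have "\<dots> = sup (sup p n - p) (sup p n - n)"
    by (simp only: lat_add_sup_distrib_left diff_conv_add_uminus)
  also have "sup p n - p = sup 0 (n - p)"
    using lat_add_sup_distrib_right[of p n "- p"] by simp
  also have "sup p n - n = sup (p - n) 0"
    using lat_add_sup_distrib_right[of p n "- n"] by simp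
  also have "sup (sup 0 (n - p)) (sup (p - n) 0) = vabs (p - n)"
    using sup.absorb1[OF vabs_nonneg[of "p - n"]] by (simp add: vabs_def ac_simps)
  finally show ?thesis by simp
qed

lemma disj_commute: "disj x y \<longleftrightarrow> disj y x"
  by (simp add: disj_def inf_commute)

lemma disj_zero [simp]: "disj x 0" "disj 0 x"
  by (simp_all add: disj_def inf.absorb1 inf.absorb2 vabs_nonneg)

lemma inf_vabs_nonneg: "0 \<le> inf (vabs u) (vabs v)"
  by (simp add: vabs_nonneg)

lemma disj_abs_mono: "disj x z \<Longrightarrow> vabs u \<le> vabs x \<Longrightarrow> disj u z"
  unfolding disj_def by (metis inf_mono order.antisym inf_vabs_nonneg order_refl)

lemma disj_add_right:
  assumes "disj u v" "disj u w" shows "disj u (v + w)"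
proof -
  have "inf (vabs u) (vabs (v + w)) \<le> inf (vabs u) (vabs v + vabs w)"
    using vabs_triangle inf_mono by blast
  also have "\<dots> \<le> inf (vabs u) (vabs v) + inf (vabs u) (vabs w)"
    by (rule inf_add_le_add_inf) (simp_all add: vabs_nonneg)
  finally show ?thesis
    using assms inf_vabs_nonneg[of u "v + w"] unfolding disj_def by simp
qed

lemma disj_abs_le_scaleR:
  assumes "disj x z" "vabs u \<le> c *\<^sub>R vabs x" shows "disj u z"
proof (cases "c \<le> 1")
  case True
  have "c *\<^sub>R vabs x \<le> vabs x"
  proof (cases "0 \<le> c")
    case True
    then show ?thesis using \<open>c \<le> 1\<close> scaleR_right_mono[of c 1 "vabs x"] vabs_nonneg by auto
  next
    case False
    then have "c *\<^sub>R vabs x \<le> 0" by (simp add: scaleR_nonpos_nonneg vabs_nonneg)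
    then show ?thesis using vabs_nonneg order.trans by blast
  qed
  then show ?thesis using assms disj_abs_mono order.trans by blast
next
  case False
  then have c: "0 < c" by simp
  have "vabs z \<le> c *\<^sub>R vabs z"
    using False scaleR_right_mono[of 1 c "vabs z"] vabs_nonneg by auto
  then have "inf (vabs u) (vabs z) \<le> inf (c *\<^sub>R vabs x) (c *\<^sub>R vabs z)"
    using assms(2) inf_mono by blast
  also have "\<dots> = c *\<^sub>R inf (vabs x) (vabs z)" by (rule scaleR_inf_distrib[OF c, symmetric])
  finally show ?thesis
    using assms(1) inf_vabs_nonneg[of u z] unfolding disj_def by simp
qed

lemma disj_abs_le_scaleR2:
  "disj x z \<Longrightarrow> vabs u \<le> c *\<^sub>R vabs x \<Longrightarrow> vabs v \<le> d *\<^sub>R vabs z \<Longrightarrow> disj u v"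
  by (meson disj_abs_le_scaleR disj_commute)

lemma inf_add_eq_zero:
  fixes a b c :: "'a::{ordered_real_vector,lattice}"
  assumes "0 \<le> a" "0 \<le> b" "0 \<le> c" "inf a b = 0" "inf a c = 0"
  shows "inf a (b + c) = 0"
  using inf_add_le_add_inf[OF assms(1-3)] assms by (simp add: order.antisym)

lemma vabs_add_disj:
  assumes d: "disj x y" shows "vabs (x + y) = vabs x + vabs y"
proof -
  define P where "P = pos_part x + pos_part y"
  define N where "N = neg_part x + neg_part y"
  have parts: "0 \<le> pos_part x" "0 \<le> pos_part y" "0 \<le> neg_part x" "0 \<le> neg_part y"
    "pos_part x \<le> vabs x" "neg_part x \<le> vabs x" "pos_part y \<le> vabs y" "neg_part y \<le> vabs y"
    by (simp_all add: pos_part_nonneg neg_part_nonneg pos_part_le_vabs neg_part_le_vabs)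
  have inf0: "inf a b = 0" if "0 \<le> a" "0 \<le> b" "a \<le> vabs x" "b \<le> vabs y" for a b
    using inf_mono[OF that(3,4)] d that(1,2) unfolding disj_def by (simp add: order.antisym)
  have "inf (pos_part x) N = 0" "inf (pos_part y) N = 0"
    unfolding N_def using parts inf0 inf0[of _ "pos_part x"] inf0[of _ "neg_part x"]
      inf_pos_part_neg_part[of x] inf_pos_part_neg_part[of y]
    by (auto intro!: inf_add_eq_zero simp: inf_commute)
  then have "inf N P = 0"
    unfolding P_def using parts by (intro inf_add_eq_zero) (auto simp: N_def inf_commute)
  then have PN: "inf P N = 0" by (simp add: inf_commute)
  have "x + y = P - N"
    unfolding P_def N_def using pos_part_minus_neg_part[of x] pos_part_minus_neg_part[of y]
    by (simp add: algebra_simps)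
  then have "vabs (x + y) = sup P N - inf P N" by (simp add: vabs_diff_eq_sup_minus_inf)
  also have "\<dots> = P + N" using lat_add_eq_sup_inf[of P N] PN by simp
  also have "\<dots> = vabs x + vabs y"
    unfolding P_def N_def using pos_part_plus_neg_part[of x] pos_part_plus_neg_part[of y]
    by (simp add: algebra_simps)
  finally show ?thesis .
qed

lemma cInf_eq_minus_cSup_uminus:
  fixes X :: "'b::{ordered_real_vector,conditionally_complete_lattice} set"
  assumes "X \<noteq> {}" "bdd_below X"
  shows "Inf X = - Sup (uminus ` X)"
proof (rule order.antisym)
  have "bdd_above (uminus ` X)" using assms(2) unfolding bdd_below_def bdd_above_def
    by (metis imageE neg_le_iff_le)
  then show "- Sup (uminus ` X) \<le> Inf X"
    using assms by (intro cInf_greatest) (auto simp: cSup_upper minus_le_iff)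
  have "Sup (uminus ` X) \<le> - Inf X"
    using assms by (intro cSup_least) (auto simp: cInf_lower)
  then show "Inf X \<le> - Sup (uminus ` X)" by (simp add: le_minus_iff)
qed

lemma cSup_set_plus:
  fixes A B :: "'b::{ordered_real_vector,conditionally_complete_lattice} set"
  assumes "A \<noteq> {}" "B \<noteq> {}" "bdd_above A" "bdd_above B"
  shows "Sup {a + b | a b. a \<in> A \<and> b \<in> B} = Sup A + Sup B"
proof (rule order.antisym)
  let ?C = "{a + b | a b. a \<in> A \<and> b \<in> B}"
  show "Sup ?C \<le> Sup A + Sup B"
    using assms by (intro cSup_least) (auto intro!: add_mono cSup_upper)
  obtain MA MB where "\<forall>x\<in>A. x \<le> MA" "\<forall>x\<in>B. x \<le> MB" using assms(3,4) unfolding bdd_above_def by blast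
  then have "\<forall>x\<in>?C. x \<le> MA + MB" by (auto intro: add_mono)
  then have bC: "bdd_above ?C" unfolding bdd_above_def by blast
  have "Sup B \<le> Sup ?C - a" if "a \<in> A" for a
    using assms that bC by (intro cSup_least) (auto intro!: cSup_upper simp: le_diff_eq add.commute)
  then have "Sup A \<le> Sup ?C - Sup B"
    using assms by (intro cSup_least) (auto simp: le_diff_eq diff_le_eq add.commute)
  then show "Sup A + Sup B \<le> Sup ?C" by (simp add: le_diff_eq)
qed

lemma cInf_add_directed:
  fixes f g :: "'i \<Rightarrow> 'b::{ordered_real_vector,conditionally_complete_lattice}"
  assumes I: "I \<noteq> {}" and f0: "\<And>i. i \<in> I \<Longrightarrow> 0 \<le> f i" and g0: "\<And>i. i \<in> I \<Longrightarrow> 0 \<le> g i"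
    and dir: "\<And>i j. i \<in> I \<Longrightarrow> j \<in> I \<Longrightarrow> \<exists>k\<in>I. f k \<le> f i \<and> g k \<le> g j"
  shows "Inf ((\<lambda>i. f i + g i) ` I) = Inf (f ` I) + Inf (g ` I)"
proof (rule order.antisym)
  have bf: "bdd_below (f ` I)" and bg: "bdd_below (g ` I)" and bfg: "bdd_below ((\<lambda>i. f i + g i) ` I)"
    using f0 g0 unfolding bdd_below_def by (auto intro: add_nonneg_nonneg)
  show "Inf (f ` I) + Inf (g ` I) \<le> Inf ((\<lambda>i. f i + g i) ` I)"
    using I bf bg by (intro cInf_greatest) (auto intro!: add_mono cInf_lower)
  let ?m = "Inf ((\<lambda>i. f i + g i) ` I)"
  have "?m - g j \<le> f i" if i: "i \<in> I" and j: "j \<in> I" for i j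
  proof -
    obtain k where k: "k \<in> I" "f k \<le> f i" "g k \<le> g j" using dir[OF i j] by blast
    have "?m \<le> f k + g k" using k(1) bfg by (intro cInf_lower) auto
    also have "\<dots> \<le> f i + g j" using k by (simp add: add_mono)
    finally show ?thesis by (simp add: diff_le_eq)
  qed
  then have "?m - g j \<le> Inf (f ` I)" if "j \<in> I" for j
    using I that by (intro cInf_greatest) auto
  then have "?m - Inf (f ` I) \<le> Inf (g ` I)"
    using I by (intro cInf_greatest) (auto simp: diff_le_eq le_diff_eq add.commute)
  then show "?m \<le> Inf (f ` I) + Inf (g ` I)" by (simp add: diff_le_eq add.commute)
qed

lemma riesz_decomposition_vabs:
  fixes y a b :: "'a::{ordered_real_vector,lattice}"
  assumes y: "vabs y \<le> a + b" and a: "0 \<le> a" and b: "0 \<le> b"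
  obtains y1 y2 where "y = y1 + y2" "vabs y1 \<le> 2 *\<^sub>R a" "vabs y2 \<le> 2 *\<^sub>R b"
proof -
  define p1 where "p1 = inf (pos_part y) a"
  define p2 where "p2 = inf (neg_part y) a"
  have "pos_part y \<le> a + b" "neg_part y \<le> a + b"
    using y pos_part_le_vabs neg_part_le_vabs order.trans by blast+
  then have r: "0 \<le> pos_part y - p1" "pos_part y - p1 \<le> b" "0 \<le> p1" "p1 \<le> a"
    "0 \<le> neg_part y - p2" "neg_part y - p2 \<le> b" "0 \<le> p2" "p2 \<le> a"
    unfolding p1_def p2_def
    using riesz_decomposition[OF pos_part_nonneg _ a b, of y]
      riesz_decomposition[OF neg_part_nonneg _ a b, of y] by simp_all
  show ?thesis
  proof
    show "y = (p1 - p2) + ((pos_part y - p1) - (neg_part y - p2))"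
      using pos_part_minus_neg_part[of y] by (simp add: algebra_simps)
    have "vabs (p1 - p2) \<le> vabs p1 + vabs p2" by (rule vabs_diff_le)
    also have "\<dots> \<le> a + a" using r by (simp add: add_mono)
    finally show "vabs (p1 - p2) \<le> 2 *\<^sub>R a" by (simp add: scaleR_2)
    have "vabs ((pos_part y - p1) - (neg_part y - p2)) \<le> vabs (pos_part y - p1) + vabs (neg_part y - p2)"
      by (rule vabs_diff_le)
    also have "\<dots> \<le> b + b" using r by (simp add: add_mono)
    finally show "vabs ((pos_part y - p1) - (neg_part y - p2)) \<le> 2 *\<^sub>R b" by (simp add: scaleR_2)
  qed
qed

section \<open>Fragments\<close>

lemma fragment_refl [simp]: "fragment x x" and fragment_zero [simp]: "fragment 0 x"
  by (simp_all add: fragment_def)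

lemma fragment_complement: "fragment y x \<Longrightarrow> fragment (x - y) x"
  by (simp add: fragment_def disj_commute)

lemma fragment_of_disj_add: "disj y z \<Longrightarrow> fragment y (y + z)"
  by (simp add: fragment_def)

lemma vabs_fragment: "fragment y x \<Longrightarrow> vabs x = vabs y + vabs (x - y)"
  using vabs_add_disj[of y "x - y"] by (simp add: fragment_def)

lemma vabs_fragment_le: "fragment y x \<Longrightarrow> vabs y \<le> vabs x"
  using vabs_fragment[of y x] vabs_nonneg[of "x - y"] by (simp add: add_increasing2)

lemma fragment_trans_disj:
  assumes "fragment z y" "fragment y x" shows "disj (x - y) (y - z)"
  using disj_abs_mono[of y "x - y" "y - z"] vabs_fragment_le[OF fragment_complement[OF assms(1)]]
    assms(2) by (simp add: fragment_def disj_commute)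

lemma fragment_trans:
  assumes zy: "fragment z y" and yx: "fragment y x" shows "fragment z x"
proof -
  have "disj z (x - y)"
    using disj_abs_mono[of y "x - y" z] vabs_fragment_le[OF zy] yx by (simp add: fragment_def)
  then have "disj z ((x - y) + (y - z))"
    using disj_add_right zy unfolding fragment_def by blast
  then show ?thesis by (simp add: fragment_def)
qed

lemma fragment_order_bounded:
  assumes f: "fragment y x" and "a \<le> x" "x \<le> b"
  shows "- (vabs a + vabs b) \<le> y \<and> y \<le> vabs a + vabs b"
proof -
  have "x \<le> vabs a + vabs b"
    using assms(3) vabs_ge(1)[of b] add_increasing[OF vabs_nonneg[of a] order_refl[of "vabs b"]] by order
  moreover have "- x \<le> vabs a + vabs b"
    using assms(2) vabs_ge(2)[of a] add_increasing2[OF vabs_nonneg[of b] order_refl[of "vabs a"]]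
    by (meson neg_le_iff_le order.trans)
  ultimately have "vabs x \<le> vabs a + vabs b" unfolding vabs_le_iff by simp
  then have "vabs y \<le> vabs a + vabs b" using vabs_fragment_le[OF f] by order
  then show ?thesis using vabs_ge[of y] by (meson minus_le_iff order.trans)
qed

lemma fragment_disj_add:
  assumes xz: "disj x z" and y1: "fragment y1 x" and y2: "fragment y2 z"
  shows "fragment (y1 + y2) (x + z)" "disj y1 y2" "disj (x - y1) (z - y2)"
proof -
  have b: "vabs y1 \<le> 1 *\<^sub>R vabs x" "vabs (x - y1) \<le> 1 *\<^sub>R vabs x"
    "vabs y2 \<le> 1 *\<^sub>R vabs z" "vabs (z - y2) \<le> 1 *\<^sub>R vabs z"
    using vabs_fragment_le y1 y2 fragment_complement by auto
  have d: "disj y1 y2" "disj y1 (z - y2)" "disj (x - y1) y2" "disj (x - y1) (z - y2)"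
    using disj_abs_le_scaleR2[OF xz] b by blast+
  have "disj y1 (x - y1)" "disj y2 (z - y2)" using y1 y2 by (auto simp: fragment_def)
  then have "disj (y1 + y2) ((x - y1) + (z - y2))"
    using d by (metis disj_add_right disj_commute)
  then show "fragment (y1 + y2) (x + z)" by (simp add: fragment_def algebra_simps)
  show "disj y1 y2" "disj (x - y1) (z - y2)" using d by auto
qed

text \<open>The splitting comes from the Riesz decomposition; the factors 2 and 3 it introduces are
  harmless, since disjointness only depends on the band generated by an element.\<close>

lemma fragment_of_disj_add_split:
  assumes xz: "disj x z" and f: "fragment y (x + z)"
  obtains y1 y2 where "y = y1 + y2" "fragment y1 x" "fragment y2 z"
proof -
  have "vabs y \<le> vabs x + vabs z" using vabs_fragment_le[OF f] vabs_add_disj[OF xz] by simp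
  then obtain y1 y2 where y: "y = y1 + y2"
    and b1: "vabs y1 \<le> 2 *\<^sub>R vabs x" and b2: "vabs y2 \<le> 2 *\<^sub>R vabs z"
    using riesz_decomposition_vabs vabs_nonneg by blast
  have "vabs (x - y1) \<le> vabs x + 2 *\<^sub>R vabs x"
    using order.trans[OF vabs_diff_le[of x y1] add_left_mono[OF b1]] .
  then have b3: "vabs (x - y1) \<le> 3 *\<^sub>R vabs x" using scaleR_add_left[of 1 2 "vabs x"] by simp
  have "vabs (z - y2) \<le> vabs z + 2 *\<^sub>R vabs z"
    using order.trans[OF vabs_diff_le[of z y2] add_left_mono[OF b2]] .
  then have b4: "vabs (z - y2) \<le> 3 *\<^sub>R vabs z" using scaleR_add_left[of 1 2 "vabs z"] by simp
  have d: "disj y1 y2" "disj (x - y1) (z - y2)"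
    using disj_abs_le_scaleR2[OF xz] b1 b2 b3 b4 by blast+
  have ay: "vabs y = vabs y1 + vabs y2" using vabs_add_disj[OF d(1)] y by simp
  have aw: "vabs ((x + z) - y) = vabs (x - y1) + vabs (z - y2)"
    using vabs_add_disj[OF d(2)] y by (simp add: algebra_simps)
  have le: "vabs y1 \<le> vabs y" "vabs y2 \<le> vabs y"
    "vabs (x - y1) \<le> vabs ((x + z) - y)" "vabs (z - y2) \<le> vabs ((x + z) - y)"
    using ay aw vabs_nonneg by (simp_all add: add_increasing add_increasing2)
  have "disj y ((x + z) - y)" using f by (simp add: fragment_def)
  then have "disj y1 ((x + z) - y)" "disj y2 ((x + z) - y)"
    using le(1,2) disj_abs_mono by blast+
  then have "disj y1 (x - y1)" "disj y2 (z - y2)"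
    using le(3,4) disj_abs_mono disj_commute by blast+
  then show ?thesis using y by (intro that) (auto simp: fragment_def)
qed

section \<open>Abstract Uryson operators\<close>

lemma uryson_add_disj: "T \<in> uryson \<Longrightarrow> disj x y \<Longrightarrow> T (x + y) = T x + T y"
  unfolding uryson_def orth_additive_def by blast

lemma uryson_zero: "T \<in> uryson \<Longrightarrow> T 0 = 0"
  using uryson_add_disj[of T 0 0] by simp

lemma uryson_fragment: "T \<in> uryson \<Longrightarrow> fragment y x \<Longrightarrow> T x = T y + T (x - y)"
  using uryson_add_disj[of T y "x - y"] by (simp add: fragment_def)

lemma uryson_order_bounded:
  "T \<in> uryson \<Longrightarrow> \<forall>x\<in>X. a \<le> x \<and> x \<le> b \<Longrightarrow> \<exists>c d. \<forall>x\<in>X. c \<le> T x \<and> T x \<le> d"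
  unfolding uryson_def order_bounded_op_def by blast

lemma uryson_bounded_on_fragments:
  assumes T: "T \<in> uryson" and X: "\<forall>x\<in>X. a \<le> x \<and> x \<le> b"
  obtains c d where "\<And>x y. x \<in> X \<Longrightarrow> fragment y x \<Longrightarrow> c \<le> T y \<and> T y \<le> d"
proof -
  let ?k = "vabs a + vabs b"
  have "\<forall>y\<in>{y. \<exists>x\<in>X. fragment y x}. - ?k \<le> y \<and> y \<le> ?k"
    using fragment_order_bounded X by blast
  then obtain c d where "\<forall>y\<in>{y. \<exists>x\<in>X. fragment y x}. c \<le> T y \<and> T y \<le> d"
    using uryson_order_bounded[OF T] by blast
  then show ?thesis using that by blast
qed

lemma uryson_nonneg_fragment_le: "T \<in> uryson \<Longrightarrow> op_pos T \<Longrightarrow> fragment y x \<Longrightarrow> T y \<le> T x"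
  using uryson_fragment[of T y x] unfolding op_pos_def by (metis add_increasing2 order_refl)

lemma uryson_intro:
  assumes "\<And>x y. disj x y \<Longrightarrow> T (x + y) = T x + T y"
    and "\<And>X a b. \<forall>x\<in>X. a \<le> x \<and> x \<le> b \<Longrightarrow> \<exists>c d. \<forall>x\<in>X. c \<le> T x \<and> T x \<le> d"
  shows "T \<in> uryson"
  using assms unfolding uryson_def orth_additive_def order_bounded_op_def by blast

lemma uryson_if_dominated:
  assumes "\<And>x y. disj x y \<Longrightarrow> T (x + y) = T x + T y"
    and "L \<in> uryson" "U \<in> uryson" "\<And>x. L x \<le> T x" "\<And>x. T x \<le> U x"
  shows "T \<in> uryson"
proof (rule uryson_intro[OF assms(1)])
  fix X :: "'a set" and a b assume ab: "\<forall>x\<in>X. a \<le> x \<and> x \<le> b"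
  obtain c1 d1 c2 d2 where "\<forall>x\<in>X. c1 \<le> L x \<and> L x \<le> d1" "\<forall>x\<in>X. c2 \<le> U x \<and> U x \<le> d2"
    using uryson_order_bounded[OF assms(2) ab] uryson_order_bounded[OF assms(3) ab] by blast
  then show "\<exists>c d. \<forall>x\<in>X. c \<le> T x \<and> T x \<le> d"
    using assms(4,5) by (meson order.trans)
qed

lemma uryson_const_zero: "(\<lambda>x. 0) \<in> uryson"
  unfolding uryson_def orth_additive_def order_bounded_op_def by auto

lemma uryson_uminus: "T \<in> uryson \<Longrightarrow> (\<lambda>x. - T x) \<in> uryson"
  unfolding uryson_def orth_additive_def order_bounded_op_def
  by (auto, metis minus_le_iff neg_le_iff_le)

lemma uryson_add: "S \<in> uryson \<Longrightarrow> T \<in> uryson \<Longrightarrow> (\<lambda>x. S x + T x) \<in> uryson"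
proof (rule uryson_intro)
  assume S: "S \<in> uryson" and T: "T \<in> uryson"
  then show "S (x + y) + T (x + y) = S x + T x + (S y + T y)" if "disj x y" for x y
    using that by (simp add: uryson_add_disj algebra_simps)
  fix X :: "'a set" and a b assume ab: "\<forall>x\<in>X. a \<le> x \<and> x \<le> b"
  obtain c1 d1 c2 d2 where "\<forall>x\<in>X. c1 \<le> S x \<and> S x \<le> d1" "\<forall>x\<in>X. c2 \<le> T x \<and> T x \<le> d2"
    using uryson_order_bounded[OF S ab] uryson_order_bounded[OF T ab] by blast
  then show "\<exists>c d. \<forall>x\<in>X. c \<le> S x + T x \<and> S x + T x \<le> d"
    by (intro exI[of _ "c1 + c2"] exI[of _ "d1 + d2"]) (auto intro: add_mono)
qed

lemma uryson_diff: "S \<in> uryson \<Longrightarrow> T \<in> uryson \<Longrightarrow> (\<lambda>x. S x - T x) \<in> uryson"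
  using uryson_add[OF _ uryson_uminus, of S T] by simp

lemma uryson_scaleR: "T \<in> uryson \<Longrightarrow> (\<lambda>x. c *\<^sub>R T x) \<in> uryson"
proof (rule uryson_intro)
  assume T: "T \<in> uryson"
  then show "c *\<^sub>R T (x + y) = c *\<^sub>R T x + c *\<^sub>R T y" if "disj x y" for x y
    using that by (simp add: uryson_add_disj scaleR_add_right)
  fix X :: "'a set" and a b assume ab: "\<forall>x\<in>X. a \<le> x \<and> x \<le> b"
  obtain c1 d1 where b: "\<forall>x\<in>X. c1 \<le> T x \<and> T x \<le> d1" using uryson_order_bounded[OF T ab] by blast
  show "\<exists>e f. \<forall>x\<in>X. e \<le> c *\<^sub>R T x \<and> c *\<^sub>R T x \<le> f"
  proof (cases "0 \<le> c")
    case True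
    then show ?thesis using b by (intro exI[of _ "c *\<^sub>R c1"] exI[of _ "c *\<^sub>R d1"]) (auto intro: scaleR_left_mono)
  next
    case False
    then show ?thesis using b by (intro exI[of _ "c *\<^sub>R d1"] exI[of _ "c *\<^sub>R c1"]) (auto intro: scaleR_left_mono_neg)
  qed
qed

section \<open>Lattice operations in \<open>U(E,F)\<close>\<close>

text \<open>The lattice operations of \<open>U(E,F)\<close> are computed fragmentwise:
  \<open>(S \<or> T)(x) = sup {S y + T (x - y) | y \<sqsubseteq> x}\<close>, and dually for the infimum.\<close>

definition frag_sup ::
  "('a::{ordered_real_vector,lattice} \<Rightarrow> 'b::{ordered_real_vector,conditionally_complete_lattice})
     \<Rightarrow> ('a \<Rightarrow> 'b) \<Rightarrow> 'a \<Rightarrow> 'b" where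
  "frag_sup S T x = Sup {S y + T (x - y) | y. fragment y x}"

definition frag_inf ::
  "('a::{ordered_real_vector,lattice} \<Rightarrow> 'b::{ordered_real_vector,conditionally_complete_lattice})
     \<Rightarrow> ('a \<Rightarrow> 'b) \<Rightarrow> 'a \<Rightarrow> 'b" where
  "frag_inf S T x = Inf {S y + T (x - y) | y. fragment y x}"

lemma fragment_sums_nonempty: "{S y + T (x - y) | y. fragment y x} \<noteq> {}"
  using fragment_refl by blast

lemma fragment_sums_bounded_above:
  assumes S: "S \<in> uryson" and T: "T \<in> uryson" and X: "\<forall>x\<in>X. a \<le> x \<and> x \<le> b"
  obtains d where "\<And>x y. x \<in> X \<Longrightarrow> fragment y x \<Longrightarrow> S y + T (x - y) \<le> d"
proof -
  obtain c1 d1 where 1: "\<And>x y. x \<in> X \<Longrightarrow> fragment y x \<Longrightarrow> c1 \<le> S y \<and> S y \<le> d1"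
    using uryson_bounded_on_fragments[OF S X] by blast
  obtain c2 d2 where 2: "\<And>x y. x \<in> X \<Longrightarrow> fragment y x \<Longrightarrow> c2 \<le> T y \<and> T y \<le> d2"
    using uryson_bounded_on_fragments[OF T X] by blast
  show ?thesis
    using 1 2[OF _ fragment_complement] by (intro that[of "d1 + d2"]) (auto intro: add_mono)
qed

lemma fragment_sums_bdd_above:
  "S \<in> uryson \<Longrightarrow> T \<in> uryson \<Longrightarrow> bdd_above {S y + T (x - y) | y. fragment y x}"
proof -
  assume S: "S \<in> uryson" and T: "T \<in> uryson"
  have "\<forall>x'\<in>{x}. x \<le> x' \<and> x' \<le> x" by simp
  then obtain d where "\<And>x' y. x' \<in> {x} \<Longrightarrow> fragment y x' \<Longrightarrow> S y + T (x' - y) \<le> d"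
    using fragment_sums_bounded_above[OF S T] by metis
  then show ?thesis unfolding bdd_above_def by blast
qed

lemma frag_sup_upper:
  "S \<in> uryson \<Longrightarrow> T \<in> uryson \<Longrightarrow> fragment y x \<Longrightarrow> S y + T (x - y) \<le> frag_sup S T x"
  unfolding frag_sup_def by (rule cSup_upper) (auto intro: fragment_sums_bdd_above)

lemma frag_sup_least: "(\<And>y. fragment y x \<Longrightarrow> S y + T (x - y) \<le> c) \<Longrightarrow> frag_sup S T x \<le> c"
  unfolding frag_sup_def by (rule cSup_least[OF fragment_sums_nonempty]) auto

lemma fragment_sums_disj_add:
  assumes S: "S \<in> uryson" and T: "T \<in> uryson" and xz: "disj x z"
  shows "{S y + T ((x + z) - y) | y. fragment y (x + z)}
       = {a + b | a b. a \<in> {S y + T (x - y) | y. fragment y x} \<and> b \<in> {S y + T (z - y) | y. fragment y z}}"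
    (is "?L = ?R")
proof (intro set_eqI iffI)
  fix v assume "v \<in> ?L"
  then obtain y where v: "v = S y + T ((x + z) - y)" and f: "fragment y (x + z)" by blast
  obtain y1 y2 where y: "y = y1 + y2" and f1: "fragment y1 x" and f2: "fragment y2 z"
    using fragment_of_disj_add_split[OF xz f] by blast
  have d: "disj y1 y2" "disj (x - y1) (z - y2)" using fragment_disj_add[OF xz f1 f2] by auto
  have "v = (S y1 + T (x - y1)) + (S y2 + T (z - y2))"
    using v y uryson_add_disj[OF S d(1)] uryson_add_disj[OF T d(2)] by (simp add: algebra_simps)
  then show "v \<in> ?R" using f1 f2 by blast
next
  fix v assume "v \<in> ?R"
  then obtain y1 y2 where v: "v = (S y1 + T (x - y1)) + (S y2 + T (z - y2))"
    and f1: "fragment y1 x" and f2: "fragment y2 z" by blast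
  have d: "fragment (y1 + y2) (x + z)" "disj y1 y2" "disj (x - y1) (z - y2)"
    using fragment_disj_add[OF xz f1 f2] by auto
  have "v = S (y1 + y2) + T ((x + z) - (y1 + y2))"
    using v uryson_add_disj[OF S d(2)] uryson_add_disj[OF T d(3)] by (simp add: algebra_simps)
  then show "v \<in> ?L" using d(1) by blast
qed

lemma frag_sup_uryson:
  assumes S: "S \<in> uryson" and T: "T \<in> uryson" shows "frag_sup S T \<in> uryson"
proof (rule uryson_intro)
  show "frag_sup S T (x + z) = frag_sup S T x + frag_sup S T z" if xz: "disj x z" for x z
    unfolding frag_sup_def fragment_sums_disj_add[OF S T xz]
    by (rule cSup_set_plus[OF fragment_sums_nonempty fragment_sums_nonempty
          fragment_sums_bdd_above[OF S T] fragment_sums_bdd_above[OF S T]])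
  fix X :: "'a set" and a b assume ab: "\<forall>x\<in>X. a \<le> x \<and> x \<le> b"
  obtain d where d: "\<And>x y. x \<in> X \<Longrightarrow> fragment y x \<Longrightarrow> S y + T (x - y) \<le> d"
    using fragment_sums_bounded_above[OF S T ab] by blast
  obtain c where c: "\<forall>x\<in>X. c \<le> S x" using uryson_order_bounded[OF S ab] by blast
  have "S x \<le> frag_sup S T x" for x
    using frag_sup_upper[OF S T fragment_refl[of x]] uryson_zero[OF T] by simp
  then show "\<exists>c d. \<forall>x\<in>X. c \<le> frag_sup S T x \<and> frag_sup S T x \<le> d"
    using c d by (meson frag_sup_least order.trans)
qed

lemma is_lub_U_frag_sup:
  assumes S: "S \<in> uryson" and T: "T \<in> uryson" shows "is_lub_U {S, T} (frag_sup S T)"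
  unfolding is_lub_U_def op_le_def op_pos_def
proof (intro conjI ballI allI impI)
  show "frag_sup S T \<in> uryson" using frag_sup_uryson[OF S T] .
  fix x
  show "0 \<le> R x - frag_sup S T x" if R: "R \<in> uryson" "\<forall>S'\<in>{S, T}. \<forall>x. 0 \<le> R x - S' x" for R
  proof -
    have "frag_sup S T x \<le> R x"
    proof (rule frag_sup_least)
      fix y assume f: "fragment y x"
      have "S y \<le> R y" "T (x - y) \<le> R (x - y)" using R(2) by auto
      then show "S y + T (x - y) \<le> R x" using uryson_fragment[OF R(1) f] by (simp add: add_mono)
    qed
    then show ?thesis by simp
  qed
  have "S x \<le> frag_sup S T x" "T x \<le> frag_sup S T x"
    using frag_sup_upper[OF S T fragment_refl[of x]] frag_sup_upper[OF S T fragment_zero[of x]]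
      uryson_zero[OF S] uryson_zero[OF T] by simp_all
  then show "0 \<le> frag_sup S T x - S' x" if "S' \<in> {S, T}" for S' using that by auto
qed

lemma is_lub_U_unique: "is_lub_U A R \<Longrightarrow> is_lub_U A R' \<Longrightarrow> R = R'"
  unfolding is_lub_U_def op_le_def op_pos_def
  by (metis (no_types) antisym_conv diff_ge_0_iff_ge ext)

lemma is_glb_U_unique: "is_glb_U A R \<Longrightarrow> is_glb_U A R' \<Longrightarrow> R = R'"
  unfolding is_glb_U_def op_le_def op_pos_def
  by (metis (no_types) antisym_conv diff_ge_0_iff_ge ext)

lemma usup_eqI: "is_lub_U {S, T} R \<Longrightarrow> usup S T = R"
  unfolding usup_def using is_lub_U_unique by blast

lemma uinf_eqI: "is_glb_U {S, T} R \<Longrightarrow> uinf S T = R"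
  unfolding uinf_def using is_glb_U_unique by blast

lemma usup_eq_frag_sup: "S \<in> uryson \<Longrightarrow> T \<in> uryson \<Longrightarrow> usup S T = frag_sup S T"
  using usup_eqI is_lub_U_frag_sup by blast

lemma usup_absorb1: "S \<in> uryson \<Longrightarrow> op_le T S \<Longrightarrow> usup S T = S"
  by (rule usup_eqI) (auto simp: is_lub_U_def op_le_def op_pos_def)

lemma usup_absorb2: "T \<in> uryson \<Longrightarrow> op_le S T \<Longrightarrow> usup S T = T"
  by (rule usup_eqI) (auto simp: is_lub_U_def op_le_def op_pos_def)

lemma uinf_absorb1: "S \<in> uryson \<Longrightarrow> op_le S T \<Longrightarrow> uinf S T = S"
  by (rule uinf_eqI) (auto simp: is_glb_U_def op_le_def op_pos_def)

lemma frag_inf_eq_minus_frag_sup: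
  assumes S: "S \<in> uryson" and T: "T \<in> uryson"
  shows "frag_inf S T x = - frag_sup (\<lambda>x. - S x) (\<lambda>x. - T x) x"
proof -
  let ?M = "{S y + T (x - y) | y. fragment y x}"
  have M: "uminus ` ?M = {(- S y) + (- T (x - y)) | y. fragment y x}"
  proof (intro set_eqI iffI)
    fix v assume "v \<in> {(- S y) + (- T (x - y)) | y. fragment y x}"
    then obtain y where "fragment y x" "v = - (S y + T (x - y))" by auto
    then show "v \<in> uminus ` ?M" by blast
  qed auto
  then have "bdd_above (uminus ` ?M)"
    using fragment_sums_bdd_above[OF uryson_uminus[OF S] uryson_uminus[OF T]] by simp
  then have "bdd_below ?M"
    unfolding bdd_above_def bdd_below_def by (metis (no_types, lifting) image_eqI minus_le_iff)
  then have "Inf ?M = - Sup (uminus ` ?M)" by (rule cInf_eq_minus_cSup_uminus[OF fragment_sums_nonempty])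
  then show ?thesis unfolding frag_inf_def frag_sup_def M .
qed

lemma frag_inf_lower:
  assumes "S \<in> uryson" "T \<in> uryson" "fragment y x" shows "frag_inf S T x \<le> S y + T (x - y)"
  using frag_sup_upper[OF uryson_uminus uryson_uminus, OF assms]
  by (simp add: frag_inf_eq_minus_frag_sup[OF assms(1,2)] minus_le_iff)

lemma frag_inf_greatest: "(\<And>y. fragment y x \<Longrightarrow> c \<le> S y + T (x - y)) \<Longrightarrow> c \<le> frag_inf S T x"
  unfolding frag_inf_def by (rule cInf_greatest[OF fragment_sums_nonempty]) auto

lemma is_glb_U_frag_inf:
  assumes S: "S \<in> uryson" and T: "T \<in> uryson" shows "is_glb_U {S, T} (frag_inf S T)"
proof -
  let ?M = "frag_sup (\<lambda>x. - S x) (\<lambda>x. - T x)"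
  have L: "is_lub_U {(\<lambda>x. - S x), (\<lambda>x. - T x)} ?M"
    by (rule is_lub_U_frag_sup[OF uryson_uminus[OF S] uryson_uminus[OF T]])
  have M: "?M \<in> uryson" "\<And>x. - S x \<le> ?M x" "\<And>x. - T x \<le> ?M x"
    and least: "\<And>R x. R \<in> uryson \<Longrightarrow> (\<And>x. - S x \<le> R x) \<Longrightarrow> (\<And>x. - T x \<le> R x) \<Longrightarrow> ?M x \<le> R x"
    using L unfolding is_lub_U_def op_le_def op_pos_def by auto
  have eq: "frag_inf S T = (\<lambda>x. - ?M x)" using frag_inf_eq_minus_frag_sup[OF S T] by blast
  show ?thesis unfolding eq is_glb_U_def
  proof (intro conjI ballI impI)
    show "(\<lambda>x. - ?M x) \<in> uryson" using uryson_uminus[OF M(1)] .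
    show "op_le (\<lambda>x. - ?M x) S'" if "S' \<in> {S, T}" for S'
      using that M(2,3) unfolding op_le_def op_pos_def by (auto simp: zero_le_add_iff_minus_le)
    show "op_le R (\<lambda>x. - ?M x)" if R: "R \<in> uryson" "\<forall>S'\<in>{S, T}. op_le R S'" for R
      using R least[OF uryson_uminus[OF R(1)]] unfolding op_le_def op_pos_def by (simp add: le_minus_iff)
  qed
qed

lemma uinf_eq_frag_inf: "S \<in> uryson \<Longrightarrow> T \<in> uryson \<Longrightarrow> uinf S T = frag_inf S T"
  using uinf_eqI is_glb_U_frag_inf by blast

lemma is_lub_U_uabs:
  fixes T :: "'a::{ordered_real_vector,lattice} \<Rightarrow> 'b::{ordered_real_vector,conditionally_complete_lattice}"
  shows "T \<in> uryson \<Longrightarrow> is_lub_U {T, \<lambda>x. - T x} (uabs T)"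
  unfolding uabs_def by (simp add: usup_eq_frag_sup uryson_uminus is_lub_U_frag_sup)

lemma uabs_uryson:
  fixes T :: "'a::{ordered_real_vector,lattice} \<Rightarrow> 'b::{ordered_real_vector,conditionally_complete_lattice}"
  shows "T \<in> uryson \<Longrightarrow> uabs T \<in> uryson"
  using is_lub_U_uabs is_lub_U_def by blast

lemma uabs_ge:
  fixes T :: "'a::{ordered_real_vector,lattice} \<Rightarrow> 'b::{ordered_real_vector,conditionally_complete_lattice}"
  shows "T \<in> uryson \<Longrightarrow> T x \<le> uabs T x \<and> - T x \<le> uabs T x"
  using is_lub_U_uabs[of T] unfolding is_lub_U_def op_le_def op_pos_def by auto

lemma uabs_least:
  fixes T :: "'a::{ordered_real_vector,lattice} \<Rightarrow> 'b::{ordered_real_vector,conditionally_complete_lattice}"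
  shows "T \<in> uryson \<Longrightarrow> R \<in> uryson \<Longrightarrow> (\<And>x. T x \<le> R x) \<Longrightarrow> (\<And>x. - T x \<le> R x) \<Longrightarrow> uabs T x \<le> R x"
  using is_lub_U_uabs[of T] unfolding is_lub_U_def op_le_def op_pos_def by auto

lemma uabs_nonneg:
  fixes T :: "'a::{ordered_real_vector,lattice} \<Rightarrow> 'b::{ordered_real_vector,conditionally_complete_lattice}"
  assumes T: "T \<in> uryson" shows "0 \<le> uabs T x"
proof -
  have "T x + - T x \<le> uabs T x + uabs T x" using uabs_ge[OF T, of x] by (intro add_mono) auto
  then have "0 \<le> uabs T x + uabs T x" by simp
  then show ?thesis by (rule nonneg_if_double_nonneg)
qed

lemma uabs_of_nonneg:
  fixes T :: "'a::{ordered_real_vector,lattice} \<Rightarrow> 'b::{ordered_real_vector,conditionally_complete_lattice}"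
  shows "T \<in> uryson \<Longrightarrow> (\<And>x. 0 \<le> T x) \<Longrightarrow> uabs T = T"
  unfolding uabs_def by (rule usup_absorb1) (auto simp: op_le_def op_pos_def intro: add_nonneg_nonneg)

lemma uabs_eq_zero_imp:
  fixes T :: "'a::{ordered_real_vector,lattice} \<Rightarrow> 'b::{ordered_real_vector,conditionally_complete_lattice}"
  assumes T: "T \<in> uryson" and z: "uabs T = (\<lambda>x. 0)" shows "T = (\<lambda>x. 0)"
proof
  fix x
  have "T x \<le> 0" "- T x \<le> 0" using uabs_ge[OF T, of x] z by auto
  then show "T x = 0" by (intro order.antisym) (simp_all add: neg_le_0_iff_le)
qed

lemma uabs_add_le:
  fixes S T :: "'a::{ordered_real_vector,lattice} \<Rightarrow> 'b::{ordered_real_vector,conditionally_complete_lattice}"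
  assumes S: "S \<in> uryson" and T: "T \<in> uryson"
  shows "uabs (\<lambda>x. S x + T x) x \<le> uabs S x + uabs T x"
proof (rule uabs_least)
  show "(\<lambda>x. S x + T x) \<in> uryson" using uryson_add[OF S T] .
  show "(\<lambda>x. uabs S x + uabs T x) \<in> uryson" using uryson_add[OF uabs_uryson[OF S] uabs_uryson[OF T]] .
  fix x
  show "S x + T x \<le> uabs S x + uabs T x"
    using uabs_ge[OF S, of x] uabs_ge[OF T, of x] by (intro add_mono) auto
  have "- S x + - T x \<le> uabs S x + uabs T x"
    using uabs_ge[OF S, of x] uabs_ge[OF T, of x] by (intro add_mono) auto
  then show "- (S x + T x) \<le> uabs S x + uabs T x" by simp
qed

lemma uabs_scaleR_le:
  fixes T :: "'a::{ordered_real_vector,lattice} \<Rightarrow> 'b::{ordered_real_vector,conditionally_complete_lattice}"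
  assumes T: "T \<in> uryson" shows "uabs (\<lambda>x. c *\<^sub>R T x) x \<le> \<bar>c\<bar> *\<^sub>R uabs T x"
proof (rule uabs_least)
  show "(\<lambda>x. c *\<^sub>R T x) \<in> uryson" using uryson_scaleR[OF T] .
  show "(\<lambda>x. \<bar>c\<bar> *\<^sub>R uabs T x) \<in> uryson" using uryson_scaleR[OF uabs_uryson[OF T]] .
  fix x
  have "T x \<le> uabs T x" "- T x \<le> uabs T x" using uabs_ge[OF T] by auto
  then have "\<bar>c\<bar> *\<^sub>R T x \<le> \<bar>c\<bar> *\<^sub>R uabs T x" "\<bar>c\<bar> *\<^sub>R (- T x) \<le> \<bar>c\<bar> *\<^sub>R uabs T x"
    by (simp_all only: scaleR_left_mono abs_ge_zero)
  then show "c *\<^sub>R T x \<le> \<bar>c\<bar> *\<^sub>R uabs T x" "- (c *\<^sub>R T x) \<le> \<bar>c\<bar> *\<^sub>R uabs T x"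
    by (cases "0 \<le> c"; simp)+
qed

lemma uabs_const_zero:
  "uabs (\<lambda>x::'a::{ordered_real_vector,lattice}. 0::'b::{ordered_real_vector,conditionally_complete_lattice}) = (\<lambda>x. 0)"
  using uabs_of_nonneg[OF uryson_const_zero] by simp

lemma is_lub_U_upos:
  fixes T :: "'a::{ordered_real_vector,lattice} \<Rightarrow> 'b::{ordered_real_vector,conditionally_complete_lattice}"
  shows "T \<in> uryson \<Longrightarrow> is_lub_U {T, \<lambda>x. 0} (upos T)"
  unfolding upos_def by (simp add: usup_eq_frag_sup uryson_const_zero is_lub_U_frag_sup)

lemma upos_uryson:
  fixes T :: "'a::{ordered_real_vector,lattice} \<Rightarrow> 'b::{ordered_real_vector,conditionally_complete_lattice}"
  shows "T \<in> uryson \<Longrightarrow> upos T \<in> uryson"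
  using is_lub_U_upos is_lub_U_def by blast

lemma upos_ge:
  fixes T :: "'a::{ordered_real_vector,lattice} \<Rightarrow> 'b::{ordered_real_vector,conditionally_complete_lattice}"
  shows "T \<in> uryson \<Longrightarrow> T x \<le> upos T x \<and> 0 \<le> upos T x"
  using is_lub_U_upos[of T] unfolding is_lub_U_def op_le_def op_pos_def by auto

lemma upos_of_nonneg:
  fixes T :: "'a::{ordered_real_vector,lattice} \<Rightarrow> 'b::{ordered_real_vector,conditionally_complete_lattice}"
  shows "T \<in> uryson \<Longrightarrow> (\<And>x. 0 \<le> T x) \<Longrightarrow> upos T = T"
  unfolding upos_def by (rule usup_absorb1) (auto simp: op_le_def op_pos_def)

lemma uneg_of_nonneg:
  fixes T :: "'a::{ordered_real_vector,lattice} \<Rightarrow> 'b::{ordered_real_vector,conditionally_complete_lattice}"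
  shows "T \<in> uryson \<Longrightarrow> (\<And>x. 0 \<le> T x) \<Longrightarrow> uneg T = (\<lambda>x. 0)"
  unfolding uneg_def by (rule usup_absorb2) (auto simp: op_le_def op_pos_def uryson_const_zero)

lemma uneg_eq_upos_minus:
  fixes T :: "'a::{ordered_real_vector,lattice} \<Rightarrow> 'b::{ordered_real_vector,conditionally_complete_lattice}"
  assumes T: "T \<in> uryson" shows "uneg T = (\<lambda>x. upos T x - T x)"
  unfolding uneg_def
proof (rule usup_eqI)
  have L: "is_lub_U {T, \<lambda>x. 0} (upos T)" using is_lub_U_upos[OF T] .
  show "is_lub_U {\<lambda>x. - T x, \<lambda>x. 0} (\<lambda>x. upos T x - T x)"
    unfolding is_lub_U_def
  proof (intro conjI ballI impI)
    show "(\<lambda>x. upos T x - T x) \<in> uryson" using uryson_diff[OF upos_uryson[OF T] T] .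
    show "op_le S (\<lambda>x. upos T x - T x)" if "S \<in> {\<lambda>x. - T x, \<lambda>x. 0}" for S
      using that upos_ge[OF T] unfolding op_le_def op_pos_def by auto
    show "op_le (\<lambda>x. upos T x - T x) R" if R: "R \<in> uryson" "\<forall>S\<in>{\<lambda>x. - T x, \<lambda>x. 0}. op_le S R" for R
    proof -
      have "- T x \<le> R x" "0 \<le> R x" for x using R(2) unfolding op_le_def op_pos_def by auto
      then have "T x \<le> R x + T x" "0 \<le> R x + T x" for x
        by (simp_all add: add_increasing zero_le_add_iff_minus_le minus_le_iff)
      then have "upos T x \<le> R x + T x" for x
        using L uryson_add[OF R(1) T] unfolding is_lub_U_def op_le_def op_pos_def by auto
      then show ?thesis unfolding op_le_def op_pos_def by (auto simp: algebra_simps)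
    qed
  qed
qed

lemma uneg_uryson:
  fixes T :: "'a::{ordered_real_vector,lattice} \<Rightarrow> 'b::{ordered_real_vector,conditionally_complete_lattice}"
  shows "T \<in> uryson \<Longrightarrow> uneg T \<in> uryson"
  by (simp add: uneg_eq_upos_minus uryson_diff upos_uryson)

lemma uneg_nonneg:
  fixes T :: "'a::{ordered_real_vector,lattice} \<Rightarrow> 'b::{ordered_real_vector,conditionally_complete_lattice}"
  shows "T \<in> uryson \<Longrightarrow> 0 \<le> uneg T x"
  using upos_ge[of T x] by (simp add: uneg_eq_upos_minus)

lemma upos_minus_uneg:
  fixes T :: "'a::{ordered_real_vector,lattice} \<Rightarrow> 'b::{ordered_real_vector,conditionally_complete_lattice}"
  shows "T \<in> uryson \<Longrightarrow> upos T x - uneg T x = T x"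
  by (simp add: uneg_eq_upos_minus)

section \<open>Disjointness of positive operators\<close>

definition pos_uryson ::
  "('a::{ordered_real_vector,lattice} \<Rightarrow> 'b::{ordered_real_vector,conditionally_complete_lattice}) \<Rightarrow> bool" where
  "pos_uryson A \<longleftrightarrow> A \<in> uryson \<and> (\<forall>x. 0 \<le> A x)"

definition pos_disj ::
  "('a::{ordered_real_vector,lattice} \<Rightarrow> 'b::{ordered_real_vector,conditionally_complete_lattice})
     \<Rightarrow> ('a \<Rightarrow> 'b) \<Rightarrow> bool" where
  "pos_disj A C \<longleftrightarrow> (\<forall>x. frag_inf A C x = 0)"

lemma pos_uryson_add: "pos_uryson A \<Longrightarrow> pos_uryson C \<Longrightarrow> pos_uryson (\<lambda>x. A x + C x)"
  unfolding pos_uryson_def by (auto intro: uryson_add add_nonneg_nonneg)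

lemma pos_uryson_scaleR: "pos_uryson C \<Longrightarrow> 0 \<le> k \<Longrightarrow> pos_uryson (\<lambda>x. k *\<^sub>R C x)"
  unfolding pos_uryson_def by (auto intro: uryson_scaleR scaleR_nonneg_nonneg)

lemma pos_uryson_uabs: "T \<in> uryson \<Longrightarrow> pos_uryson (uabs T)"
  unfolding pos_uryson_def using uabs_uryson uabs_nonneg by blast

lemma frag_inf_commute: "S \<in> uryson \<Longrightarrow> T \<in> uryson \<Longrightarrow> frag_inf S T = frag_inf T S"
  by (metis uinf_def insert_commute uinf_eq_frag_inf)

lemma pos_disjI:
  assumes "pos_uryson A" "pos_uryson C" "\<And>x. frag_inf A C x \<le> 0" shows "pos_disj A C"
  using assms unfolding pos_disj_def pos_uryson_def
  by (metis add_nonneg_nonneg frag_inf_greatest order.antisym)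

lemma udisj_iff_pos_disj: "S \<in> uryson \<Longrightarrow> T \<in> uryson \<Longrightarrow> udisj S T \<longleftrightarrow> pos_disj (uabs S) (uabs T)"
  unfolding udisj_def pos_disj_def by (simp add: uinf_eq_frag_inf uabs_uryson fun_eq_iff)

lemma pos_disj_commute: "pos_uryson A \<Longrightarrow> pos_uryson C \<Longrightarrow> pos_disj A C \<longleftrightarrow> pos_disj C A"
  unfolding pos_disj_def pos_uryson_def by (simp add: frag_inf_commute)

lemma pos_disj_mono:
  assumes A: "pos_uryson A" and C': "pos_uryson C'" and le: "\<And>x. C' x \<le> C x" and p: "pos_disj A C"
  shows "pos_disj A C'"
proof (rule pos_disjI[OF A C'])
  fix x
  have "frag_inf A C' x \<le> frag_inf A C x"
  proof (rule frag_inf_greatest)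
    fix y assume f: "fragment y x"
    have "frag_inf A C' x \<le> A y + C' (x - y)"
      using A C' f unfolding pos_uryson_def by (intro frag_inf_lower) auto
    also have "\<dots> \<le> A y + C (x - y)" using le by (simp add: add_left_mono)
    finally show "frag_inf A C' x \<le> A y + C (x - y)" .
  qed
  then show "frag_inf A C' x \<le> 0" using p unfolding pos_disj_def by simp
qed

lemma pos_disj_zero:
  assumes A: "pos_uryson A" shows "pos_disj A (\<lambda>x. 0)"
proof (rule pos_disjI[OF A])
  show "pos_uryson (\<lambda>x. 0)" by (simp add: pos_uryson_def uryson_const_zero)
  show "frag_inf A (\<lambda>x. 0) x \<le> 0" for x
    using frag_inf_lower[OF _ uryson_const_zero fragment_zero, of A x] A uryson_zero[of A]
    unfolding pos_uryson_def by simp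
qed

text \<open>For fragments \<open>w \<sqsubseteq> y \<sqsubseteq> x\<close> we have \<open>C' w \<le> C' y\<close> and \<open>A (x - w) = A (x - y) + A (y - w)\<close>,
  so the infimum for \<open>C + C'\<close> at \<open>x\<close> is at most \<open>(C \<and> A) y + C' y + A (x - y)\<close>.\<close>

lemma pos_disj_add_left:
  assumes A: "pos_uryson A" and C: "pos_uryson C" and C': "pos_uryson C'"
    and p1: "pos_disj C A" and p2: "pos_disj C' A"
  shows "pos_disj (\<lambda>x. C x + C' x) A"
proof (rule pos_disjI[OF pos_uryson_add[OF C C'] A])
  fix x
  let ?t = "frag_inf (\<lambda>x. C x + C' x) A x"
  have Au: "A \<in> uryson" and Cu: "C \<in> uryson" and C'u: "C' \<in> uryson" and C'p: "op_pos C'"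
    using A C C' unfolding pos_uryson_def op_pos_def by auto
  have "?t \<le> frag_inf C' A x"
  proof (rule frag_inf_greatest)
    fix y assume yx: "fragment y x"
    have "?t - (C' y + A (x - y)) \<le> frag_inf C A y"
    proof (rule frag_inf_greatest)
      fix w assume wy: "fragment w y"
      have "?t \<le> (C w + C' w) + A (x - w)"
        using fragment_trans[OF wy yx] uryson_add[OF Cu C'u] Au by (intro frag_inf_lower) auto
      also have "A (x - w) = A (x - y) + A (y - w)"
        using uryson_add_disj[OF Au fragment_trans_disj[OF wy yx]] by (simp add: algebra_simps)
      also have "(C w + C' w) + (A (x - y) + A (y - w)) \<le> (C w + A (y - w)) + (C' y + A (x - y))"
        using uryson_nonneg_fragment_le[OF C'u C'p wy] by (simp add: algebra_simps add_right_mono)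
      finally show "?t - (C' y + A (x - y)) \<le> C w + A (y - w)" by (simp add: diff_le_eq)
    qed
    then show "?t \<le> C' y + A (x - y)" using p1 unfolding pos_disj_def by (simp add: diff_le_eq)
  qed
  then show "?t \<le> 0" using p2 unfolding pos_disj_def by simp
qed

lemma pos_disj_add:
  assumes A: "pos_uryson A" and C: "pos_uryson C" and C': "pos_uryson C'"
    and "pos_disj A C" "pos_disj A C'"
  shows "pos_disj A (\<lambda>x. C x + C' x)"
  using assms pos_disj_add_left pos_disj_commute pos_uryson_add by metis

lemma pos_disj_scaleR:
  assumes A: "pos_uryson A" and C: "pos_uryson C" and k: "0 \<le> k" and p: "pos_disj A C"
  shows "pos_disj A (\<lambda>x. k *\<^sub>R C x)"
proof (cases "k \<le> 1")
  case True
  show ?thesis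
  proof (rule pos_disj_mono[OF A pos_uryson_scaleR[OF C k] _ p])
    show "k *\<^sub>R C x \<le> C x" for x
      using scaleR_right_mono[OF True, of "C x"] C unfolding pos_uryson_def by auto
  qed
next
  case False
  then have k1: "1 < k" by simp
  show ?thesis
  proof (rule pos_disjI[OF A pos_uryson_scaleR[OF C k]])
    fix x
    let ?t = "frag_inf A (\<lambda>x. k *\<^sub>R C x) x"
    have "(1/k) *\<^sub>R ?t \<le> frag_inf A C x"
    proof (rule frag_inf_greatest)
      fix y assume f: "fragment y x"
      have "?t \<le> A y + k *\<^sub>R C (x - y)"
        using A pos_uryson_scaleR[OF C k] f unfolding pos_uryson_def by (intro frag_inf_lower) auto
      also have "\<dots> \<le> k *\<^sub>R (A y + C (x - y))"
        using scaleR_right_mono[of 1 k "A y"] k1 A unfolding pos_uryson_def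
        by (simp add: scaleR_add_right add_right_mono)
      finally have "(1/k) *\<^sub>R ?t \<le> (1/k) *\<^sub>R (k *\<^sub>R (A y + C (x - y)))"
        using k1 by (intro scaleR_left_mono) auto
      then show "(1/k) *\<^sub>R ?t \<le> A y + C (x - y)" using k1 by simp
    qed
    then have "(1/k) *\<^sub>R ?t \<le> 0" using p unfolding pos_disj_def by simp
    then have "k *\<^sub>R ((1/k) *\<^sub>R ?t) \<le> k *\<^sub>R 0" using k1 by (intro scaleR_left_mono) auto
    then show "?t \<le> 0" using k1 by simp
  qed
qed

lemma nonneg_if_disj_decomposition:
  assumes V: "pos_uryson V" and E1: "E1 \<in> uryson" and E2: "E2 \<in> uryson"
    and sum: "\<And>x. V x = E1 x + E2 x" and d: "udisj E1 E2"
  shows "0 \<le> E1 x" "0 \<le> E2 x"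
proof -
  have Vp: "\<And>x. 0 \<le> V x" using V unfolding pos_uryson_def by auto
  have b1: "- uabs E1 y \<le> E1 y" "- uabs E1 y \<le> - E1 y" for y
    using uabs_ge[OF E1] by (auto simp: minus_le_iff)
  have b2: "- uabs E2 y \<le> E2 y" "- uabs E2 y \<le> - E2 y" for y
    using uabs_ge[OF E2] by (auto simp: minus_le_iff)
  have "- E1 x \<le> frag_inf (uabs E1) (uabs E2) x \<and> - E2 x \<le> frag_inf (uabs E1) (uabs E2) x"
  proof (intro conjI frag_inf_greatest)
    fix y assume f: "fragment y x"
    have "- uabs E1 y + 0 + - uabs E2 (x - y) \<le> E1 y + V (x - y) + (- E2 (x - y))"
      by (intro add_mono b1 b2 Vp)
    also have "\<dots> = E1 x" using uryson_fragment[OF E1 f] sum[of "x - y"] by simp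
    finally have "- (uabs E1 y + uabs E2 (x - y)) \<le> E1 x" by simp
    then show "- E1 x \<le> uabs E1 y + uabs E2 (x - y)" by (simp only: minus_le_iff[of "E1 x"])
    have "- uabs E2 (x - y) + 0 + - uabs E1 y \<le> E2 (x - y) + V y + (- E1 y)"
      by (intro add_mono b1 b2 Vp)
    also have "\<dots> = E2 x" using uryson_fragment[OF E2 f] sum[of y] by (simp add: algebra_simps)
    finally have "- (uabs E1 y + uabs E2 (x - y)) \<le> E2 x" by (simp add: algebra_simps)
    then show "- E2 x \<le> uabs E1 y + uabs E2 (x - y)" by (simp only: minus_le_iff[of "E2 x"])
  qed
  then show "0 \<le> E1 x" "0 \<le> E2 x"
    using d unfolding udisj_iff_pos_disj[OF E1 E2] pos_disj_def by auto
qed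

section \<open>The projections \<open>\<pi>\<^sup>D\<close>\<close>

lemma admissible_fragment: "admissible G \<Longrightarrow> x \<in> G \<Longrightarrow> fragment y x \<Longrightarrow> y \<in> G"
  unfolding admissible_def by blast

lemma admissible_add: "admissible G \<Longrightarrow> x \<in> G \<Longrightarrow> y \<in> G \<Longrightarrow> disj x y \<Longrightarrow> x + y \<in> G"
  unfolding admissible_def by blast

lemma admissible_zero: "admissible G \<Longrightarrow> G \<noteq> {} \<Longrightarrow> 0 \<in> G"
  using admissible_fragment fragment_zero by blast

lemma admissible_Int: "admissible G1 \<Longrightarrow> admissible G2 \<Longrightarrow> admissible (G1 \<inter> G2)"
  unfolding admissible_def by blast

lemma admissible_UNIV: "admissible UNIV"
  unfolding admissible_def by blast

lemma admissible_Inter: "finite F \<Longrightarrow> F \<subseteq> Collect admissible \<Longrightarrow> admissible (\<Inter>F)"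
  by (induction F rule: finite_induct) (auto simp: admissible_UNIV admissible_Int)

lemma piD_pos_values_le:
  "pos_uryson A \<Longrightarrow> v \<in> insert 0 {A y | y. fragment y x \<and> y \<in> G} \<Longrightarrow> v \<le> A x"
  unfolding pos_uryson_def using uryson_nonneg_fragment_le[of A] by (auto simp: op_pos_def)

lemma piD_pos_bdd_above: "pos_uryson A \<Longrightarrow> bdd_above {A y | y. fragment y x \<and> y \<in> G}"
  using piD_pos_values_le unfolding bdd_above_def by blast

lemma piD_pos_upper: "pos_uryson A \<Longrightarrow> y \<in> G \<Longrightarrow> fragment y x \<Longrightarrow> A y \<le> piD_pos G A x"
  unfolding piD_pos_def by (rule cSup_upper) (auto intro: piD_pos_bdd_above)

lemma piD_pos_nonneg: "pos_uryson A \<Longrightarrow> 0 \<le> piD_pos G A x"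
  unfolding piD_pos_def by (rule cSup_upper) (auto intro: piD_pos_bdd_above)

lemma piD_pos_least:
  "0 \<le> c \<Longrightarrow> (\<And>y. fragment y x \<Longrightarrow> y \<in> G \<Longrightarrow> A y \<le> c) \<Longrightarrow> piD_pos G A x \<le> c"
  unfolding piD_pos_def by (rule cSup_least) auto

lemma piD_pos_le: "pos_uryson A \<Longrightarrow> piD_pos G A x \<le> A x"
  unfolding piD_pos_def by (rule cSup_least) (auto dest: piD_pos_values_le)

lemma piD_pos_UNIV: "pos_uryson A \<Longrightarrow> piD_pos UNIV A = A"
  using piD_pos_le piD_pos_upper[where G=UNIV, OF _ _ fragment_refl] by (auto intro!: ext order.antisym)

lemma piD_pos_const_zero: "piD_pos G (\<lambda>x. 0) = (\<lambda>x. 0)"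
  unfolding piD_pos_def by (auto intro!: ext cSup_eq_maximum)

lemma piD_eq_piD_pos: "T \<in> uryson \<Longrightarrow> (\<And>x. 0 \<le> T x) \<Longrightarrow> piD D T = piD_pos D T"
  unfolding piD_def by (simp add: upos_of_nonneg uneg_of_nonneg piD_pos_const_zero)

lemma piD_pos_mono:
  assumes A': "pos_uryson A'" and le: "\<And>x. A x \<le> A' x"
  shows "piD_pos G A x \<le> piD_pos G A' x"
  using piD_pos_upper[OF A'] le
  by (intro piD_pos_least[OF piD_pos_nonneg[OF A']]) (blast intro: order.trans)

lemma piD_pos_mono_set:
  assumes A: "pos_uryson A" and "G \<subseteq> G'" shows "piD_pos G A x \<le> piD_pos G' A x"
  using assms piD_pos_upper[OF A] by (intro piD_pos_least[OF piD_pos_nonneg[OF A]]) blast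

lemma piD_pos_values_disj_add:
  assumes A: "A \<in> uryson" and G: "admissible G" and xz: "disj x z"
  shows "{A y | y. fragment y (x + z) \<and> y \<in> G}
       = {a + b | a b. a \<in> {A y | y. fragment y x \<and> y \<in> G} \<and> b \<in> {A y | y. fragment y z \<and> y \<in> G}}"
    (is "?L = ?R")
proof (intro set_eqI iffI)
  fix v assume "v \<in> ?L"
  then obtain y where v: "v = A y" and f: "fragment y (x + z)" and yG: "y \<in> G" by blast
  obtain y1 y2 where y: "y = y1 + y2" and f1: "fragment y1 x" and f2: "fragment y2 z"
    using fragment_of_disj_add_split[OF xz f] by blast
  have d: "disj y1 y2" using fragment_disj_add[OF xz f1 f2] by auto
  have "y1 \<in> G" "y2 \<in> G"
    using admissible_fragment[OF G yG] fragment_of_disj_add[OF d]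
      fragment_of_disj_add[of y2 y1] d y by (auto simp: disj_commute add.commute)
  moreover have "v = A y1 + A y2" using uryson_add_disj[OF A d] y v by simp
  ultimately show "v \<in> ?R" using f1 f2 by blast
next
  fix v assume "v \<in> ?R"
  then obtain y1 y2 where v: "v = A y1 + A y2" and f1: "fragment y1 x" and f2: "fragment y2 z"
    and "y1 \<in> G" "y2 \<in> G" by blast
  moreover have d: "fragment (y1 + y2) (x + z)" "disj y1 y2"
    using fragment_disj_add[OF xz f1 f2] by auto
  ultimately show "v \<in> ?L"
    using uryson_add_disj[OF A d(2)] admissible_add[OF G] by (metis (mono_tags, lifting) mem_Collect_eq)
qed

lemma pos_uryson_piD_pos:
  assumes A: "pos_uryson A" and G: "admissible G" shows "pos_uryson (piD_pos G A)"
proof (cases "G = {}")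
  case True
  then show ?thesis by (simp add: piD_pos_def pos_uryson_def uryson_const_zero)
next
  case False
  have Au: "A \<in> uryson" using A pos_uryson_def by blast
  let ?V = "\<lambda>x. {A y | y. fragment y x \<and> y \<in> G}"
  have "0 \<in> ?V x" for x
    using admissible_zero[OF G False] uryson_zero[OF Au] fragment_zero by (metis (mono_tags, lifting) mem_Collect_eq)
  then have eq: "piD_pos G A x = Sup (?V x)" and ne: "?V x \<noteq> {}" for x
    unfolding piD_pos_def by (auto simp: insert_absorb)
  have bd: "bdd_above (?V x)" for x using piD_pos_bdd_above[OF A] .
  have "piD_pos G A \<in> uryson"
  proof (rule uryson_if_dominated[where L="\<lambda>x. 0" and U=A])
    show "piD_pos G A (x + z) = piD_pos G A x + piD_pos G A z" if "disj x z" for x z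
      unfolding eq piD_pos_values_disj_add[OF Au G that] by (rule cSup_set_plus[OF ne ne bd bd])
  qed (use uryson_const_zero Au piD_pos_nonneg[OF A] piD_pos_le[OF A] in auto)
  then show ?thesis using piD_pos_nonneg[OF A] by (simp add: pos_uryson_def)
qed

lemma piD_pos_comp:
  assumes A: "pos_uryson A" and G1: "admissible G1" and G2: "admissible G2"
  shows "piD_pos G1 (piD_pos G2 A) = piD_pos (G1 \<inter> G2) A"
proof (rule ext, rule order.antisym)
  fix x
  show "piD_pos G1 (piD_pos G2 A) x \<le> piD_pos (G1 \<inter> G2) A x"
  proof (rule piD_pos_least[OF piD_pos_nonneg[OF A]])
    fix y assume yx: "fragment y x" and yG: "y \<in> G1"
    show "piD_pos G2 A y \<le> piD_pos (G1 \<inter> G2) A x"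
    proof (rule piD_pos_least[OF piD_pos_nonneg[OF A]])
      fix z assume zy: "fragment z y" and "z \<in> G2"
      then show "A z \<le> piD_pos (G1 \<inter> G2) A x"
        using admissible_fragment[OF G1 yG zy] fragment_trans[OF zy yx] by (intro piD_pos_upper[OF A]) auto
    qed
  qed
  have P2: "pos_uryson (piD_pos G2 A)" using pos_uryson_piD_pos[OF A G2] .
  show "piD_pos (G1 \<inter> G2) A x \<le> piD_pos G1 (piD_pos G2 A) x"
  proof (rule piD_pos_least[OF piD_pos_nonneg[OF P2]])
    fix z assume zx: "fragment z x" and zG: "z \<in> G1 \<inter> G2"
    have "A z \<le> piD_pos G2 A z" using zG by (intro piD_pos_upper[OF A]) auto
    also have "\<dots> \<le> piD_pos G1 (piD_pos G2 A) x" using zG zx by (intro piD_pos_upper[OF P2]) auto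
    finally show "A z \<le> piD_pos G1 (piD_pos G2 A) x" .
  qed
qed

lemma piD_pos_idem: "pos_uryson A \<Longrightarrow> admissible G \<Longrightarrow> piD_pos G (piD_pos G A) = piD_pos G A"
  by (simp add: piD_pos_comp)

text \<open>To see \<open>V x \<le> \<pi>\<^sup>D V x\<close>, compare \<open>W y = W x - W (x - y) \<le> W x - V x + V y\<close> on
  fragments \<open>y \<in> D\<close>.\<close>

lemma piD_pos_fixed_below:
  assumes V: "pos_uryson V" and W: "pos_uryson W" and le: "\<And>x. V x \<le> W x"
    and WD: "piD_pos D W = W"
  shows "piD_pos D V = V"
proof
  fix x
  have Vu: "V \<in> uryson" and Wu: "W \<in> uryson" using V W pos_uryson_def by auto
  let ?s = "piD_pos D V x"
  have "piD_pos D W x \<le> W x - V x + ?s"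
  proof (rule piD_pos_least)
    show "0 \<le> W x - V x + ?s" using le[of x] piD_pos_nonneg[OF V, of D x] by (simp add: add_nonneg_nonneg)
    fix y assume yx: "fragment y x" and yD: "y \<in> D"
    have "W y = W x - W (x - y)" using uryson_fragment[OF Wu yx] by simp
    also have "\<dots> \<le> W x - V (x - y)" using le by (simp add: diff_left_mono)
    also have "\<dots> = W x - V x + V y" using uryson_fragment[OF Vu yx] by simp
    also have "\<dots> \<le> W x - V x + ?s" using piD_pos_upper[OF V yD yx] by (simp add: add_left_mono)
    finally show "W y \<le> W x - V x + ?s" .
  qed
  then have "V x \<le> ?s" using WD by (simp add: fun_eq_iff)
  then show "?s = V x" using piD_pos_le[OF V] by (simp add: order.antisym)
qed

section \<open>The projection \<open>\<pi>\<^sup>\<AA>\<close>\<close>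

text \<open>\<open>\<pi>\<^sup>\<AA>\<close> is computed as the pointwise infimum of \<open>\<pi>\<^sup>G\<close> over finite intersections \<open>G\<close> of
  members of \<open>\<AA>\<close>: this family is directed downwards, which makes the infimum orthogonally
  additive, and since \<open>\<pi>\<^sup>D \<pi>\<^sup>G = \<pi>\<^sup>D\<^sup>\<inter>\<^sup>G\<close> it has the same lower bounds among band projections.\<close>

definition fin_Inters :: "'a set set \<Rightarrow> 'a set set" where
  "fin_Inters AA = {\<Inter>F | F. finite F \<and> F \<subseteq> AA}"

definition piA_pos ::
  "'a::{ordered_real_vector,lattice} set set \<Rightarrow> ('a \<Rightarrow> 'b::{ordered_real_vector,conditionally_complete_lattice})
     \<Rightarrow> 'a \<Rightarrow> 'b" where
  "piA_pos AA A x = Inf ((\<lambda>G. piD_pos G A x) ` fin_Inters AA)"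

definition piA ::
  "'a::{ordered_real_vector,lattice} set set \<Rightarrow> ('a \<Rightarrow> 'b::{ordered_real_vector,conditionally_complete_lattice})
     \<Rightarrow> 'a \<Rightarrow> 'b" where
  "piA AA T = (\<lambda>x. piA_pos AA (upos T) x - piA_pos AA (uneg T) x)"

lemma UNIV_in_fin_Inters: "UNIV \<in> fin_Inters AA"
  unfolding fin_Inters_def by (rule CollectI, rule exI[of _ "{}"]) auto

lemma in_fin_Inters: "D \<in> AA \<Longrightarrow> D \<in> fin_Inters AA"
  unfolding fin_Inters_def by (rule CollectI, rule exI[of _ "{D}"]) auto

lemma Int_in_fin_Inters: "G1 \<in> fin_Inters AA \<Longrightarrow> G2 \<in> fin_Inters AA \<Longrightarrow> G1 \<inter> G2 \<in> fin_Inters AA"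
  unfolding fin_Inters_def by clarify (metis Inter_Un_distrib finite_UnI le_sup_iff)

lemma admissible_fin_Inters: "AA \<subseteq> Collect admissible \<Longrightarrow> G \<in> fin_Inters AA \<Longrightarrow> admissible G"
  unfolding fin_Inters_def using admissible_Inter by blast

lemma fin_Inters_induct [consumes 1, case_names UNIV Int]:
  assumes G: "G \<in> fin_Inters AA" and UNIV: "P UNIV"
    and Int: "\<And>D G. D \<in> AA \<Longrightarrow> G \<in> fin_Inters AA \<Longrightarrow> P G \<Longrightarrow> P (D \<inter> G)"
  shows "P G"
proof -
  obtain F where F: "G = \<Inter>F" "finite F" "F \<subseteq> AA" using G unfolding fin_Inters_def by blast
  have "P (\<Inter>F) \<and> \<Inter>F \<in> fin_Inters AA"
    using F(2,3)
  proof (induction F rule: finite_induct)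
    case empty then show ?case using UNIV UNIV_in_fin_Inters by simp
  next
    case (insert D F)
    then show ?case using Int[of D "\<Inter>F"] Int_in_fin_Inters[OF in_fin_Inters] by auto
  qed
  then show ?thesis using F by blast
qed

lemma piA_pos_lower: "pos_uryson A \<Longrightarrow> G \<in> fin_Inters AA \<Longrightarrow> piA_pos AA A x \<le> piD_pos G A x"
  unfolding piA_pos_def by (rule cInf_lower) (auto simp: bdd_below_def intro: piD_pos_nonneg)

lemma piA_pos_greatest: "(\<And>G. G \<in> fin_Inters AA \<Longrightarrow> c \<le> piD_pos G A x) \<Longrightarrow> c \<le> piA_pos AA A x"
  unfolding piA_pos_def using UNIV_in_fin_Inters by (intro cInf_greatest) auto

lemma piA_pos_nonneg: "pos_uryson A \<Longrightarrow> 0 \<le> piA_pos AA A x"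
  by (rule piA_pos_greatest) (rule piD_pos_nonneg)

lemma piA_pos_le: "pos_uryson A \<Longrightarrow> piA_pos AA A x \<le> A x"
  using piA_pos_lower[OF _ UNIV_in_fin_Inters] piD_pos_UNIV by metis

lemma piA_pos_const_zero: "piA_pos AA (\<lambda>x. 0::'b::{ordered_real_vector,conditionally_complete_lattice}) = (\<lambda>x. 0)"
proof
  have "(\<lambda>G. 0::'b) ` fin_Inters AA = {0}" using UNIV_in_fin_Inters[of AA] by auto
  then show "piA_pos AA (\<lambda>x. 0::'b) x = 0" for x unfolding piA_pos_def piD_pos_const_zero by simp
qed

lemma pos_uryson_piA_pos:
  assumes AA: "AA \<subseteq> Collect admissible" and A: "pos_uryson A" shows "pos_uryson (piA_pos AA A)"
proof -
  have Au: "A \<in> uryson" using A pos_uryson_def by blast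
  have "piA_pos AA A \<in> uryson"
  proof (rule uryson_if_dominated[where L="\<lambda>x. 0" and U=A])
    fix x z :: 'a assume xz: "disj x z"
    have "piD_pos G A (x + z) = piD_pos G A x + piD_pos G A z" if "G \<in> fin_Inters AA" for G
      using pos_uryson_piD_pos[OF A admissible_fin_Inters[OF AA that]] uryson_add_disj[OF _ xz]
      unfolding pos_uryson_def by blast
    then have "piA_pos AA A (x + z) = Inf ((\<lambda>G. piD_pos G A x + piD_pos G A z) ` fin_Inters AA)"
      unfolding piA_pos_def by (simp cong: image_cong)
    also have "\<dots> = piA_pos AA A x + piA_pos AA A z"
      unfolding piA_pos_def
    proof (rule cInf_add_directed)
      fix G1 G2 assume "G1 \<in> fin_Inters AA" "G2 \<in> fin_Inters AA"
      then show "\<exists>G\<in>fin_Inters AA. piD_pos G A x \<le> piD_pos G1 A x \<and> piD_pos G A z \<le> piD_pos G2 A z"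
        using Int_in_fin_Inters piD_pos_mono_set[OF A] by (meson inf_le1 inf_le2)
    qed (auto intro: piD_pos_nonneg[OF A] UNIV_in_fin_Inters)
    finally show "piA_pos AA A (x + z) = piA_pos AA A x + piA_pos AA A z" .
  qed (use uryson_const_zero Au piA_pos_nonneg[OF A] piA_pos_le[OF A] in auto)
  then show ?thesis using piA_pos_nonneg[OF A] by (simp add: pos_uryson_def)
qed

lemma piA_of_nonneg:
  assumes T: "T \<in> uryson" and p: "op_pos T" shows "piA AA T = piA_pos AA T"
  using p unfolding piA_def op_pos_def by (simp add: upos_of_nonneg[OF T] uneg_of_nonneg[OF T] piA_pos_const_zero)

section \<open>Disjoint complements and band projections\<close>

lemma uorth_uryson: "T \<in> uorth X \<Longrightarrow> T \<in> uryson"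
  unfolding uorth_def by blast

lemma uorthI:
  fixes X :: "('a::{ordered_real_vector,lattice} \<Rightarrow> 'b::{ordered_real_vector,conditionally_complete_lattice}) set"
  shows "T \<in> uryson \<Longrightarrow> X \<subseteq> uryson \<Longrightarrow> (\<And>S. S \<in> X \<Longrightarrow> pos_disj (uabs S) (uabs T)) \<Longrightarrow> T \<in> uorth X"
  unfolding uorth_def using udisj_iff_pos_disj by blast

lemma uorthD:
  fixes X :: "('a::{ordered_real_vector,lattice} \<Rightarrow> 'b::{ordered_real_vector,conditionally_complete_lattice}) set"
  shows "T \<in> uorth X \<Longrightarrow> X \<subseteq> uryson \<Longrightarrow> S \<in> X \<Longrightarrow> pos_disj (uabs S) (uabs T)"
  unfolding uorth_def using udisj_iff_pos_disj by blast

lemma uorth_zero: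
  fixes X :: "('a::{ordered_real_vector,lattice} \<Rightarrow> 'b::{ordered_real_vector,conditionally_complete_lattice}) set"
  assumes X: "X \<subseteq> uryson" shows "(\<lambda>x. 0) \<in> uorth X"
  using X by (intro uorthI uryson_const_zero) (auto simp: uabs_const_zero intro: pos_disj_zero pos_uryson_uabs)

lemma uorth_solid:
  fixes X :: "('a::{ordered_real_vector,lattice} \<Rightarrow> 'b::{ordered_real_vector,conditionally_complete_lattice}) set"
  assumes X: "X \<subseteq> uryson" and S': "S' \<in> uryson" and T: "T \<in> uorth X"
    and le: "\<And>x. uabs S' x \<le> uabs T x"
  shows "S' \<in> uorth X"
proof (rule uorthI[OF S' X])
  fix S assume "S \<in> X"
  then show "pos_disj (uabs S) (uabs S')"
    using pos_disj_mono[OF _ pos_uryson_uabs[OF S'] le] uorthD[OF T X] X pos_uryson_uabs by blast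
qed

lemma uorth_add:
  fixes X :: "('a::{ordered_real_vector,lattice} \<Rightarrow> 'b::{ordered_real_vector,conditionally_complete_lattice}) set"
  assumes X: "X \<subseteq> uryson" and T1: "T1 \<in> uorth X" and T2: "T2 \<in> uorth X"
  shows "(\<lambda>x. T1 x + T2 x) \<in> uorth X"
proof (rule uorthI[OF uryson_add[OF uorth_uryson[OF T1] uorth_uryson[OF T2]] X])
  fix S assume S: "S \<in> X"
  have u: "S \<in> uryson" "T1 \<in> uryson" "T2 \<in> uryson" using S X T1 T2 uorth_uryson by auto
  have "pos_disj (uabs S) (\<lambda>x. uabs T1 x + uabs T2 x)"
    using pos_disj_add[OF pos_uryson_uabs pos_uryson_uabs pos_uryson_uabs] u
      uorthD[OF T1 X S] uorthD[OF T2 X S] by blast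
  then show "pos_disj (uabs S) (uabs (\<lambda>x. T1 x + T2 x))"
    using pos_disj_mono[OF pos_uryson_uabs pos_uryson_uabs uabs_add_le] u uryson_add by blast
qed

lemma uorth_scaleR:
  fixes X :: "('a::{ordered_real_vector,lattice} \<Rightarrow> 'b::{ordered_real_vector,conditionally_complete_lattice}) set"
  assumes X: "X \<subseteq> uryson" and T: "T \<in> uorth X"
  shows "(\<lambda>x. c *\<^sub>R T x) \<in> uorth X"
proof (rule uorthI[OF uryson_scaleR[OF uorth_uryson[OF T]] X])
  fix S assume S: "S \<in> X"
  have u: "S \<in> uryson" "T \<in> uryson" using S X T uorth_uryson by auto
  have "pos_disj (uabs S) (\<lambda>x. \<bar>c\<bar> *\<^sub>R uabs T x)"
    using pos_disj_scaleR[OF pos_uryson_uabs pos_uryson_uabs _ uorthD[OF T X S]] u by simp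
  then show "pos_disj (uabs S) (uabs (\<lambda>x. c *\<^sub>R T x))"
    using pos_disj_mono[OF pos_uryson_uabs pos_uryson_uabs uabs_scaleR_le] u uryson_scaleR by blast
qed

lemma uorth_diff:
  fixes X :: "('a::{ordered_real_vector,lattice} \<Rightarrow> 'b::{ordered_real_vector,conditionally_complete_lattice}) set"
  assumes "X \<subseteq> uryson" "T1 \<in> uorth X" "T2 \<in> uorth X"
  shows "(\<lambda>x. T1 x - T2 x) \<in> uorth X"
  using uorth_add[OF assms(1,2) uorth_scaleR[OF assms(1,3), of "-1"]] by simp

lemma udisj_self_imp_zero:
  fixes T :: "'a::{ordered_real_vector,lattice} \<Rightarrow> 'b::{ordered_real_vector,conditionally_complete_lattice}"
  assumes T: "T \<in> uryson" and "udisj T T" shows "T = (\<lambda>x. 0)"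
proof -
  have "uinf (uabs T) (uabs T) = uabs T" using uabs_uryson[OF T] by (rule uinf_absorb1) (simp add: op_le_def op_pos_def)
  then show ?thesis using assms(2) uabs_eq_zero_imp[OF T] unfolding udisj_def by simp
qed

lemma band_proj_of_nonneg:
  fixes R :: "('a::{ordered_real_vector,lattice} \<Rightarrow> 'b::{ordered_real_vector,conditionally_complete_lattice}) \<Rightarrow> ('a \<Rightarrow> 'b)"
  assumes R: "band_proj R" and T: "T \<in> uryson" and p: "op_pos T"
  shows "pos_uryson (R T)" "\<And>x. R T x \<le> T x" "R (R T) = R T"
proof -
  obtain B where B: "uband B" "proj_onto R B" using R band_proj_def by blast
  have Bu: "B \<subseteq> uryson" and B_add: "\<forall>S\<in>B. \<forall>T\<in>B. (\<lambda>x. S x + T x) \<in> B"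
    and B_scaleR: "\<forall>c. \<forall>S\<in>B. (\<lambda>x. c *\<^sub>R S x) \<in> B"
    using B(1) unfolding uband_def by blast+
  have B_diff: "(\<lambda>x. S x - T x) \<in> B" if "S \<in> B" "T \<in> B" for S T
  proof -
    have "(\<lambda>x. (- 1) *\<^sub>R T x) \<in> B" by (rule B_scaleR[rule_format, OF that(2)])
    then have "(\<lambda>x. S x + (- 1) *\<^sub>R T x) \<in> B" by (rule B_add[rule_format, OF that(1)])
    then show ?thesis by simp
  qed
  have RT: "R T \<in> B" "(\<lambda>x. T x - R T x) \<in> uorth B" using B(2) T unfolding proj_onto_def by auto
  then have RTu: "R T \<in> uryson" using Bu by blast
  have "udisj (R T) (\<lambda>x. T x - R T x)" using RT unfolding uorth_def by blast
  then have "0 \<le> R T x" "0 \<le> T x - R T x" for x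
    using nonneg_if_disj_decomposition[OF _ RTu uryson_diff[OF T RTu]] T p
    unfolding pos_uryson_def op_pos_def by simp_all
  then show "pos_uryson (R T)" "\<And>x. R T x \<le> T x" using RTu pos_uryson_def by auto
  have RRT: "R (R T) \<in> B" "(\<lambda>x. R T x - R (R T) x) \<in> uorth B" using B(2) RTu unfolding proj_onto_def by auto
  then have "(\<lambda>x. R T x - R (R T) x) \<in> B \<inter> uorth B" using B_diff[OF RT(1)] by blast
  then have "(\<lambda>x. R T x - R (R T) x) = (\<lambda>x. 0)" using udisj_self_imp_zero unfolding uorth_def by blast
  then show "R (R T) = R T" by (simp add: fun_eq_iff)
qed

section \<open>The band \<open>\<U>\<^sub>\<AA>(E,F)\<^sup>\<perp>\<close>\<close>

lemma uabs_zero_on_null_set: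
  fixes S :: "'a::{ordered_real_vector,lattice} \<Rightarrow> 'b::{ordered_real_vector,conditionally_complete_lattice}"
  assumes S: "S \<in> uryson" and N: "admissible (null_set S)" and y: "y \<in> null_set S"
  shows "uabs S y = 0"
proof -
  have "uabs S y \<le> 0" unfolding uabs_def usup_eq_frag_sup[OF S uryson_uminus[OF S]]
  proof (rule frag_sup_least)
    fix w assume "fragment w y"
    then have "w \<in> null_set S" "y - w \<in> null_set S"
      using admissible_fragment[OF N y] fragment_complement by blast+
    then show "S w + - S (y - w) \<le> 0" by (simp add: null_set_def)
  qed
  then show ?thesis using uabs_nonneg[OF S] by (simp add: order.antisym)
qed

lemma admissible_null_set: "pos_uryson V \<Longrightarrow> admissible (null_set V)"
  unfolding admissible_def null_set_def pos_uryson_def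
  by (auto simp: uryson_add_disj)
    (metis op_pos_def order.antisym uryson_nonneg_fragment_le)

text \<open>The estimate behind \<open>A - \<pi>\<^sup>\<AA> A \<perp> C\<close> for every \<open>C\<close> fixed by \<open>\<pi>\<^sup>G\<close>: on fragments
  \<open>y \<in> G\<close> the operator \<open>A - Q\<close> is dominated by \<open>\<pi>\<^sup>G A - Q\<close>, while \<open>\<pi>\<^sup>G C\<close> only sees such
  fragments.\<close>

lemma frag_inf_le_piD_pos_gap:
  assumes A: "pos_uryson A" and C: "pos_uryson C" and Q: "pos_uryson Q" and G: "admissible G"
    and QG: "\<And>x. Q x \<le> piD_pos G A x" and CG: "piD_pos G C = C"
  shows "frag_inf C (\<lambda>x. A x - Q x) x \<le> piD_pos G A x - Q x"
proof -
  let ?V = "\<lambda>x. A x - Q x" and ?Z = "\<lambda>x. piD_pos G A x - Q x"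
  let ?t = "frag_inf C ?V x"
  have Au: "A \<in> uryson" and Cu: "C \<in> uryson" and Qu: "Q \<in> uryson"
    using A C Q pos_uryson_def by auto
  have Vu: "?V \<in> uryson" using uryson_diff[OF Au Qu] .
  have Zu: "?Z \<in> uryson" and Zp: "op_pos ?Z"
    using uryson_diff[OF _ Qu] pos_uryson_piD_pos[OF A G] QG unfolding pos_uryson_def op_pos_def by auto
  have tC: "?t \<le> C x" using frag_inf_lower[OF Cu Vu fragment_refl[of x]] uryson_zero[OF Vu] by simp
  have "piD_pos G C x \<le> C x - ?t + ?Z x"
  proof (rule piD_pos_least)
    show "0 \<le> C x - ?t + ?Z x" using tC QG[of x] by (simp add: add_nonneg_nonneg)
    fix y assume yx: "fragment y x" and yG: "y \<in> G"
    have "?t \<le> C (x - y) + ?V y" using frag_inf_lower[OF Cu Vu fragment_complement[OF yx]] by simp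
    also have "C (x - y) = C x - C y" using uryson_fragment[OF Cu yx] by simp
    also have "?V y \<le> ?Z y" using piD_pos_upper[OF A yG fragment_refl] by (simp add: diff_right_mono)
    also have "?Z y \<le> ?Z x" using uryson_nonneg_fragment_le[OF Zu Zp yx] .
    finally show "C y \<le> C x - ?t + ?Z x" by (simp add: algebra_simps)
  qed
  then show ?thesis using CG by (simp add: algebra_simps)
qed

lemma U_fam_subset_uryson: "U_fam AA \<subseteq> uryson"
  unfolding U_fam_def by blast

lemma uabs_diff_le_add:
  fixes E1 E2 :: "'a::{ordered_real_vector,lattice} \<Rightarrow> 'b::{ordered_real_vector,conditionally_complete_lattice}"
  assumes E1: "pos_uryson E1" and E2: "pos_uryson E2"
  shows "uabs (\<lambda>x. E1 x - E2 x) x \<le> E1 x + E2 x"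
proof -
  have u: "E1 \<in> uryson" "E2 \<in> uryson" and p: "0 \<le> E1 x" "0 \<le> E2 x" for x
    using E1 E2 unfolding pos_uryson_def by auto
  show ?thesis
  proof (rule uabs_least[OF uryson_diff[OF u] uryson_add[OF u]])
    show "E1 x - E2 x \<le> E1 x + E2 x" "- (E1 x - E2 x) \<le> E1 x + E2 x" for x
      using add_left_mono[OF order.trans[OF neg_le_0_iff_le[THEN iffD2, OF p(2)] p(2)], of "E1 x"]
        add_left_mono[OF order.trans[OF neg_le_0_iff_le[THEN iffD2, OF p(1)] p(1)], of "E2 x"]
      by (simp_all add: algebra_simps)
  qed
qed

locale upward_saturated_family =
  fixes AA :: "'a::{ordered_real_vector,lattice} set set"
  assumes admissible_members: "AA \<subseteq> Collect admissible"
    and saturated: "upward_saturated AA"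
begin

lemma uorth_U_fam_if_piD_fixed:
  fixes T :: "'a \<Rightarrow> 'b::{ordered_real_vector,conditionally_complete_lattice}"
  assumes T: "T \<in> uryson" and fixed: "\<And>D. D \<in> AA \<Longrightarrow> piD_pos D (uabs T) = uabs T"
  shows "T \<in> uorth (U_fam AA)"
proof (rule uorthI[OF T])
  show "U_fam AA \<subseteq> uryson" unfolding U_fam_def by blast
  fix S :: "'a \<Rightarrow> 'b" assume "S \<in> U_fam AA"
  then have S: "S \<in> uryson" and D: "null_set S \<in> AA" unfolding U_fam_def by auto
  have N: "admissible (null_set S)" using D admissible_members by blast
  show "pos_disj (uabs S) (uabs T)"
  proof (rule pos_disjI[OF pos_uryson_uabs[OF S] pos_uryson_uabs[OF T]])
    fix x
    let ?t = "frag_inf (uabs S) (uabs T) x"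
    have "piD_pos (null_set S) (uabs T) x \<le> uabs T x - ?t"
    proof (rule piD_pos_least)
      show "0 \<le> uabs T x - ?t"
        using frag_inf_lower[OF uabs_uryson[OF S] uabs_uryson[OF T] fragment_zero[of x]]
          uryson_zero[OF uabs_uryson[OF S]] by simp
      fix y assume yx: "fragment y x" and yD: "y \<in> null_set S"
      have "?t \<le> uabs S y + uabs T (x - y)"
        by (rule frag_inf_lower[OF uabs_uryson[OF S] uabs_uryson[OF T] yx])
      also have "\<dots> = uabs T x - uabs T y"
        using uabs_zero_on_null_set[OF S N yD] uryson_fragment[OF uabs_uryson[OF T] yx] by simp
      finally show "uabs T y \<le> uabs T x - ?t" by (simp add: algebra_simps)
    qed
    then show "?t \<le> 0" using fixed[OF D] by (simp add: algebra_simps)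
  qed
qed

text \<open>Here upward saturation enters: the null set of \<open>|T| - \<pi>\<^sup>D |T|\<close> contains \<open>D\<close>.\<close>

lemma piD_fixed_if_uorth_U_fam:
  fixes T :: "'a \<Rightarrow> 'b::{ordered_real_vector,conditionally_complete_lattice}"
  assumes T: "T \<in> uorth (U_fam AA)" and D: "D \<in> AA"
  shows "piD_pos D (uabs T) = uabs T"
proof -
  have A: "pos_uryson (uabs T)" using pos_uryson_uabs[OF uorth_uryson[OF T]] .
  define V where "V = (\<lambda>x. uabs T x - piD_pos D (uabs T) x)"
  have V: "pos_uryson V" unfolding V_def pos_uryson_def
    using uryson_diff pos_uryson_piD_pos[OF A] D admissible_members A piD_pos_le[OF A]
    unfolding pos_uryson_def by auto
  have "D \<subseteq> null_set V"
    using piD_pos_upper[OF A _ fragment_refl] piD_pos_le[OF A] unfolding null_set_def V_def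
    by (auto intro: order.antisym)
  then have "null_set V \<in> AA"
    using saturated D admissible_null_set[OF V] unfolding upward_saturated_def by blast
  then have "V \<in> U_fam AA" using V unfolding U_fam_def pos_uryson_def by blast
  then have "udisj V T" using T uorth_def by blast
  moreover have "uinf V (uabs T) = V"
    using V piD_pos_nonneg[OF A] unfolding pos_uryson_def
    by (intro uinf_absorb1) (auto simp: op_le_def op_pos_def V_def)
  moreover have "uabs V = V" using V uabs_of_nonneg unfolding pos_uryson_def by blast
  ultimately have "V = (\<lambda>x. 0)" unfolding udisj_def by simp
  then show ?thesis unfolding V_def by (simp add: fun_eq_iff)
qed

lemma piD_fixed_fin_Inters:
  fixes T :: "'a \<Rightarrow> 'b::{ordered_real_vector,conditionally_complete_lattice}"
  assumes T: "T \<in> uorth (U_fam AA)" and G: "G \<in> fin_Inters AA"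
  shows "piD_pos G (uabs T) = uabs T"
  using G
proof (induction rule: fin_Inters_induct)
  have A: "pos_uryson (uabs T)" using pos_uryson_uabs[OF uorth_uryson[OF T]] .
  {
    case UNIV
    show ?case using piD_pos_UNIV[OF A] .
  next
    case (Int D G)
    have "piD_pos (D \<inter> G) (uabs T) = piD_pos D (piD_pos G (uabs T))"
      using piD_pos_comp[OF A] admissible_members Int.hyps admissible_fin_Inters[OF admissible_members]
      by auto
    then show ?case using Int.IH piD_fixed_if_uorth_U_fam[OF T Int.hyps(1)] by simp
  }
qed

lemma pos_uryson_compl_piA_pos:
  "pos_uryson A \<Longrightarrow> pos_uryson (\<lambda>x. A x - piA_pos AA A x)"
  using uryson_diff pos_uryson_piA_pos[OF admissible_members] piA_pos_le
  unfolding pos_uryson_def by fastforce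

lemma piA_pos_in_uorth:
  assumes A: "pos_uryson A" shows "piA_pos AA A \<in> uorth (U_fam AA)"
proof (rule uorth_U_fam_if_piD_fixed)
  have Q: "pos_uryson (piA_pos AA A)" using pos_uryson_piA_pos[OF admissible_members A] .
  then show "piA_pos AA A \<in> uryson" using pos_uryson_def by blast
  fix D assume D: "D \<in> AA"
  have "admissible D" using D admissible_members by blast
  then have "piD_pos D (piA_pos AA A) = piA_pos AA A"
    using piD_pos_fixed_below[OF Q pos_uryson_piD_pos[OF A] piA_pos_lower[OF A in_fin_Inters[OF D]]]
      piD_pos_idem[OF A] by blast
  then show "piD_pos D (uabs (piA_pos AA A)) = uabs (piA_pos AA A)"
    using Q uabs_of_nonneg[of "piA_pos AA A"] unfolding pos_uryson_def by simp
qed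

lemma pos_uryson_upos_uneg: "T \<in> uryson \<Longrightarrow> pos_uryson (upos T) \<and> pos_uryson (uneg T)"
  unfolding pos_uryson_def using upos_uryson upos_ge uneg_uryson uneg_nonneg by blast

lemma piA_in_uorth: "T \<in> uryson \<Longrightarrow> piA AA T \<in> uorth (U_fam AA)"
  unfolding piA_def using uorth_diff[OF U_fam_subset_uryson] piA_pos_in_uorth pos_uryson_upos_uneg by blast

lemma uorth_disj_compl_piA_pos:
  fixes W :: "'a \<Rightarrow> 'b::{ordered_real_vector,conditionally_complete_lattice}"
  assumes A: "pos_uryson A" and W: "W \<in> uorth (U_fam AA)"
  shows "pos_disj (uabs W) (\<lambda>x. A x - piA_pos AA A x)"
proof (rule pos_disjI[OF pos_uryson_uabs[OF uorth_uryson[OF W]] pos_uryson_compl_piA_pos[OF A]])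
  fix x
  let ?t = "frag_inf (uabs W) (\<lambda>x. A x - piA_pos AA A x) x"
  have "?t + piA_pos AA A x \<le> piD_pos G A x" if G: "G \<in> fin_Inters AA" for G
    using frag_inf_le_piD_pos_gap[OF A pos_uryson_uabs[OF uorth_uryson[OF W]]
        pos_uryson_piA_pos[OF admissible_members A] admissible_fin_Inters[OF admissible_members G]
        piA_pos_lower[OF A G] piD_fixed_fin_Inters[OF W G]]
    by (simp add: le_diff_eq)
  then have "?t + piA_pos AA A x \<le> piA_pos AA A x" by (rule piA_pos_greatest)
  then show "?t \<le> 0" by simp
qed

lemma compl_piA_in_uorth_uorth:
  fixes T :: "'a \<Rightarrow> 'b::{ordered_real_vector,conditionally_complete_lattice}"
  assumes T: "T \<in> uryson"
  shows "(\<lambda>x. T x - piA AA T x) \<in> uorth (uorth (U_fam AA))"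
proof -
  define E1 where "E1 = (\<lambda>x. upos T x - piA_pos AA (upos T) x)"
  define E2 where "E2 = (\<lambda>x. uneg T x - piA_pos AA (uneg T) x)"
  have E: "pos_uryson E1" "pos_uryson E2"
    unfolding E1_def E2_def using pos_uryson_compl_piA_pos pos_uryson_upos_uneg[OF T] by blast+
  have eq: "(\<lambda>x. T x - piA AA T x) = (\<lambda>x. E1 x - E2 x)"
    unfolding E1_def E2_def piA_def using upos_minus_uneg[OF T] by (auto simp: algebra_simps)
  have Eu: "(\<lambda>x. E1 x - E2 x) \<in> uryson" using E uryson_diff unfolding pos_uryson_def by blast
  show ?thesis unfolding eq
  proof (rule uorthI[OF Eu])
    show "uorth (U_fam AA) \<subseteq> uryson" using uorth_uryson by blast
    fix W :: "'a \<Rightarrow> 'b" assume W: "W \<in> uorth (U_fam AA)"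
    have "pos_disj (uabs W) (\<lambda>x. E1 x + E2 x)"
      using pos_disj_add[OF pos_uryson_uabs[OF uorth_uryson[OF W]] E]
        uorth_disj_compl_piA_pos[OF _ W] pos_uryson_upos_uneg[OF T]
      unfolding E1_def E2_def by blast
    then show "pos_disj (uabs W) (uabs (\<lambda>x. E1 x - E2 x))"
      using pos_disj_mono[OF pos_uryson_uabs[OF uorth_uryson[OF W]] pos_uryson_uabs[OF Eu]
          uabs_diff_le_add[OF E]] by blast
  qed
qed

lemma proj_onto_piA: "proj_onto (piA AA) (uorth (U_fam AA))"
  unfolding proj_onto_def using piA_in_uorth compl_piA_in_uorth_uorth by blast

lemma uorth_U_fam_lub_closed:
  fixes T :: "'a \<Rightarrow> 'b::{ordered_real_vector,conditionally_complete_lattice}"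
  assumes sub: "M \<subseteq> uorth (U_fam AA)" and lub: "is_lub_U M T"
  shows "T \<in> uorth (U_fam AA)"
proof -
  have Tu: "T \<in> uryson" using lub is_lub_U_def by blast
  define P where "P = piA AA T"
  define C where "C = (\<lambda>x. T x - P x)"
  have PB: "P \<in> uorth (U_fam AA)" unfolding P_def by (rule piA_in_uorth[OF Tu])
  have CB: "C \<in> uorth (uorth (U_fam AA))" unfolding C_def P_def by (rule compl_piA_in_uorth_uorth[OF Tu])
  have Pu: "P \<in> uryson" and Cu: "C \<in> uryson" using PB CB uorth_uryson by auto
  have "C = (\<lambda>x. 0)"
  proof (cases "M = {}")
    case True
    then have "op_le T (\<lambda>x. T x - uabs C x)"
      using lub uryson_diff[OF Tu uabs_uryson[OF Cu]] unfolding is_lub_U_def by blast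
    then have "uabs C = (\<lambda>x. 0)"
      using uabs_nonneg[OF Cu] unfolding op_le_def op_pos_def by (auto intro!: ext order.antisym)
    then show ?thesis using uabs_eq_zero_imp[OF Cu] by blast
  next
    case False
    txt \<open>Each \<open>a \<in> M\<close> gives a disjoint decomposition \<open>T - a = (P - a) + C\<close> of a positive operator.\<close>
    have parts: "0 \<le> P x - a x \<and> 0 \<le> C x" if a: "a \<in> M" for a x
    proof -
      have au: "a \<in> uryson" using a sub uorth_uryson by blast
      have "pos_uryson (\<lambda>x. T x - a x)"
        using uryson_diff[OF Tu au] lub a unfolding pos_uryson_def is_lub_U_def op_le_def op_pos_def by blast
      moreover have "udisj (\<lambda>x. P x - a x) C"
        using CB uorth_diff[OF U_fam_subset_uryson PB] a sub unfolding uorth_def by blast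
      ultimately show ?thesis
        using nonneg_if_disj_decomposition[OF _ uryson_diff[OF Pu au] Cu] unfolding C_def by simp
    qed
    then have "op_le T P" using lub Pu unfolding is_lub_U_def op_le_def op_pos_def by blast
    then show ?thesis
      using parts False unfolding op_le_def op_pos_def C_def by (auto intro!: ext order.antisym)
  qed
  then have "T = P" unfolding C_def by (simp add: fun_eq_iff)
  then show ?thesis using PB by simp
qed

lemma uband_uorth_U_fam: "uband (uorth (U_fam AA) :: ('a \<Rightarrow> 'b::{ordered_real_vector,conditionally_complete_lattice}) set)"
  unfolding uband_def
proof (intro conjI ballI allI impI)
  let ?B = "uorth (U_fam AA) :: ('a \<Rightarrow> 'b) set"
  show "?B \<subseteq> uryson" using uorth_uryson by blast
  show "(\<lambda>x. 0) \<in> ?B" by (rule uorth_zero[OF U_fam_subset_uryson])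
  show "(\<lambda>x. S x + T x) \<in> ?B" if "S \<in> ?B" "T \<in> ?B" for S T
    using uorth_add[OF U_fam_subset_uryson that] .
  show "(\<lambda>x. c *\<^sub>R S x) \<in> ?B" if "S \<in> ?B" for c S
    using uorth_scaleR[OF U_fam_subset_uryson that] .
  show "S \<in> ?B"
    if "S \<in> uryson" "T \<in> ?B" "op_le (uabs S) (uabs T)" for S T
    using uorth_solid[OF U_fam_subset_uryson that(1,2)] that(3) unfolding op_le_def op_pos_def by simp
  show "T \<in> ?B" if "M \<subseteq> ?B \<and> is_lub_U M T" for M T
    using uorth_U_fam_lub_closed that by blast
qed

lemma bp_le_piA_piD:
  assumes D: "D \<in> AA"
  shows "bp_le (piA AA) (piD D :: ('a \<Rightarrow> 'b::{ordered_real_vector,conditionally_complete_lattice}) \<Rightarrow> _)"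
  unfolding bp_le_def
proof (intro ballI impI)
  fix T :: "'a \<Rightarrow> 'b" assume T: "T \<in> uryson" and p: "op_pos T"
  then have "piA_pos AA T x \<le> piD_pos D T x" for x
    using piA_pos_lower[OF _ in_fin_Inters[OF D]] unfolding pos_uryson_def op_pos_def by blast
  then show "op_le (piA AA T) (piD D T)"
    using piA_of_nonneg[OF T p] piD_eq_piD_pos[OF T] p unfolding op_le_def op_pos_def by simp
qed

lemma band_proj_le_piD_pos:
  fixes R :: "('a \<Rightarrow> 'b::{ordered_real_vector,conditionally_complete_lattice}) \<Rightarrow> ('a \<Rightarrow> 'b)"
  assumes R: "band_proj R" and below: "\<And>D. D \<in> AA \<Longrightarrow> bp_le R (piD D)"
  shows "G \<in> fin_Inters AA \<Longrightarrow> T \<in> uryson \<Longrightarrow> op_pos T \<Longrightarrow> R T x \<le> piD_pos G T x"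
proof (induction G arbitrary: T x rule: fin_Inters_induct)
  case UNIV
  then have "pos_uryson T" unfolding pos_uryson_def op_pos_def by blast
  then have "piD_pos UNIV T = T" by (rule piD_pos_UNIV)
  then show ?case using band_proj_of_nonneg(2)[OF R UNIV] by simp
next
  case (Int D G)
  have A: "pos_uryson T" using Int.prems unfolding pos_uryson_def op_pos_def by blast
  have RT: "pos_uryson (R T)" using band_proj_of_nonneg(1)[OF R Int.prems] .
  have "R T x = R (R T) x" using band_proj_of_nonneg(3)[OF R Int.prems] by simp
  also have "\<dots> \<le> piD_pos D (R T) x"
    using below[OF Int.hyps(1)] RT piD_eq_piD_pos[of "R T" D]
    unfolding bp_le_def pos_uryson_def op_le_def op_pos_def by auto
  also have "\<dots> \<le> piD_pos D (piD_pos G T) x"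
    using Int.IH[OF Int.prems] by (intro piD_pos_mono pos_uryson_piD_pos[OF A]
        admissible_fin_Inters[OF admissible_members Int.hyps(2)])
  also have "\<dots> = piD_pos (D \<inter> G) T x"
    using piD_pos_comp[OF A] admissible_members Int.hyps admissible_fin_Inters[OF admissible_members]
    by auto
  finally show ?case .
qed

lemma is_inf_bp_piA:
  "is_inf_bp {piD D | D. D \<in> AA} (piA AA :: ('a \<Rightarrow> 'b::{ordered_real_vector,conditionally_complete_lattice}) \<Rightarrow> _)"
  unfolding is_inf_bp_def
proof (intro conjI ballI allI impI)
  show "band_proj (piA AA :: ('a \<Rightarrow> 'b) \<Rightarrow> _)"
    unfolding band_proj_def using uband_uorth_U_fam proj_onto_piA by blast
  show "bp_le (piA AA) Q" if "Q \<in> {piD D | D. D \<in> AA}" for Q :: "('a \<Rightarrow> 'b) \<Rightarrow> _"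
    using that bp_le_piA_piD by blast
  fix R :: "('a \<Rightarrow> 'b) \<Rightarrow> _" assume "band_proj R \<and> (\<forall>Q\<in>{piD D | D. D \<in> AA}. bp_le R Q)"
  then have R: "band_proj R" and below: "\<And>D. D \<in> AA \<Longrightarrow> bp_le R (piD D)" by blast+
  show "bp_le R (piA AA)"
    unfolding bp_le_def
  proof (intro ballI impI)
    fix T :: "'a \<Rightarrow> 'b" assume T: "T \<in> uryson" "op_pos T"
    have "R T x \<le> piA_pos AA T x" for x
      using band_proj_le_piD_pos[OF R below _ T] by (rule piA_pos_greatest)
    then show "op_le (R T) (piA AA T)" unfolding piA_of_nonneg[OF T] op_le_def op_pos_def by simp
  qed
qed

end

theorem mainTheorem6:
  fixes AA :: "'a::{ordered_real_vector,lattice} set set"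
  assumes "AA \<subseteq> Collect admissible"
    and "upward_saturated AA"
  shows "\<exists>P :: ('a \<Rightarrow> 'b::{ordered_real_vector,conditionally_complete_lattice}) \<Rightarrow> ('a \<Rightarrow> 'b).
           is_inf_bp {piD D | D. D \<in> AA} P \<and> proj_onto P (uorth (U_fam AA))"
proof -
  interpret upward_saturated_family AA using assms by unfold_locales
  show ?thesis using is_inf_bp_piA proj_onto_piA by blast
qed
end
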